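(* Let $X=(X_n)_{n\in\mathbb{Z}}$ be an i.i.d. sequence of random variables with values in $\{-1,0,1,2,\dots\}$, whose mean exists, with $0<\mathbb{P}[X_0=-1]\le1$ and $\mathbb{E}[X_0]\le0$. Then the descendant tree $[D(0),0]$ of $0$ in the record graph of $X$ (with children ordered by the order of $\mathbb{Z}$) is an ordered Galton-Watson tree with offspring distribution equal to the distribution of $X_0+1$.
   Context: The record map is $R_X(i)=\inf\{n>i: \sum_{l=i}^{n-1}X_l\ge0\}$ if this set is nonempty, and $R_X(i)=i$ otherwise; the record graph has vertex set $\mathbb{Z}$ and directed edges $i\to R_X(i)$ (child to parent) for $R_X(i)\ne i$. $D(0)$ is the set consisting of $0$ and all $j\ne0$ with $R_X^n(j)=0$ for some $n\ge1$, with the induced tree structure rooted at $0$. An ordered Galton-Watson tree with offspring distribution $\pi$ is the plane tree in which every vertex independently has a $\pi$-distributed number of children. *)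

theory Defs
  imports "HOL-Probability.Probability"
begin

definition record_map :: "(int \<Rightarrow> int) \<Rightarrow> int \<Rightarrow> int" where
  "record_map x i =
     (if \<exists>n>i. (\<Sum>l\<in>{i..<n}. x l) \<ge> 0
      then (LEAST n. n > i \<and> (\<Sum>l\<in>{i..<n}. x l) \<ge> 0)
      else i)"

definition desc0 :: "(int \<Rightarrow> int) \<Rightarrow> int set" where
  "desc0 x = {0} \<union> {j. j \<noteq> 0 \<and> (\<exists>n\<ge>1. (record_map x ^^ n) j = 0)}"

definition rchildren :: "(int \<Rightarrow> int) \<Rightarrow> int \<Rightarrow> int set" where
  "rchildren x v = {j \<in> desc0 x. record_map x j \<noteq> j \<and> record_map x j = v}"

text \<open>Ulam-Harris labelling of the descendant tree of 0, children ordered increasingly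
  in the order of Z: word u labels vertex v; the k-th child (0-based) of v gets u @ [k].\<close>
inductive desc_label :: "(int \<Rightarrow> int) \<Rightarrow> nat list \<Rightarrow> int \<Rightarrow> bool" for x where
  root: "desc_label x [] 0"
| child: "desc_label x u v \<Longrightarrow> j \<in> rchildren x v \<Longrightarrow>
          finite {j' \<in> rchildren x v. j' < j} \<Longrightarrow>
          k = card {j' \<in> rchildren x v. j' < j} \<Longrightarrow> desc_label x (u @ [k]) j"

definition desc_tree :: "(int \<Rightarrow> int) \<Rightarrow> nat list set" where
  "desc_tree x = {u. \<exists>v. desc_label x u v}"

definition plane_tree :: "nat list set \<Rightarrow> bool" where
  "plane_tree t \<longleftrightarrow> [] \<in> t \<and>
     (\<forall>u k. u @ [k] \<in> t \<longrightarrow> u \<in> t) \<and>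
     (\<forall>u k k'. u @ [k] \<in> t \<longrightarrow> k' < k \<longrightarrow> u @ [k'] \<in> t)"

definition nchild :: "nat list set \<Rightarrow> nat list \<Rightarrow> nat" where
  "nchild t u = card {k. u @ [k] \<in> t}"

definition trunc :: "nat list set \<Rightarrow> nat \<Rightarrow> nat list set" where
  "trunc t n = {u \<in> t. length u \<le> n}"

text \<open>These finite-dimensional laws determine the law of T.\<close>
definition ordered_GW :: "'a measure \<Rightarrow> ('a \<Rightarrow> nat list set) \<Rightarrow> (nat \<Rightarrow> real) \<Rightarrow> bool" where
  "ordered_GW M T \<pi> \<longleftrightarrow>
     (\<forall>n t. finite t \<and> plane_tree t \<and> (\<forall>u\<in>t. length u \<le> n) \<longrightarrow>
        {\<omega> \<in> space M. trunc (T \<omega>) n = t} \<in> sets M \<and>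
        measure M {\<omega> \<in> space M. trunc (T \<omega>) n = t} =
          (\<Prod>u\<in>{u \<in> t. length u < n}. \<pi> (nchild t u)))"

end

theory Submission
  imports Defs
begin

text \<open>
  The descendant tree of \<open>0\<close> is read off the walk to the left of \<open>0\<close>. Because the steps are
  at least \<open>-1\<close>, the children of \<open>0\<close> are the points \<open>c\<^sub>0 = -1 > c\<^sub>1 > \<dots> > c\<^bsub>K-1\<^esub>\<close>,
  \<open>K = X\<^bsub>-1\<^esub> + 1\<close>, where \<open>c\<^bsub>r+1\<^esub>\<close> is the first point at which the walk summed backwards from
  \<open>c\<^sub>r\<close> becomes negative; the descendants of \<open>c\<^sub>r\<close> fill the block \<open>[c\<^bsub>r+1\<^esub>, c\<^sub>r)\<close>, on which
  the walk, translated, carries the descendant tree of \<open>c\<^sub>r\<close> in the same way.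

  So on the event that the backward walk from \<open>0\<close> reaches \<open>-1\<close> (i.e. the descendants of \<open>0\<close>
  fill a finite block), the tree truncated at height \<open>n + 1\<close> is \<open>t\<close> iff \<open>X\<^bsub>-1\<^esub> + 1\<close> is the root
  degree of \<open>t\<close> and consecutive blocks carry the subtrees of \<open>t\<close> truncated at height \<open>n\<close>. Such
  events depend on disjoint finite windows once they are split by the block lengths, so by
  independence and stationarity their probabilities factorise exactly as in the Galton-Watson
  recursion. Finally the probability \<open>q\<close> of that event satisfies
  \<open>q = \<Sum>\<^sub>k P[X\<^sub>0 + 1 = k] q\<^sup>k\<close>, and as \<open>E[X\<^sub>0 + 1] \<le> 1\<close> and \<open>P[X\<^sub>0 = -1] > 0\<close> this forces \<open>q = 1\<close>.
\<close>

section \<open>Backward passages of a skip-free walk\<close>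

definition skip_free :: "(int \<Rightarrow> int) \<Rightarrow> bool" where
  "skip_free x \<longleftrightarrow> (\<forall>i. x i \<ge> -1)"

definition translate :: "(int \<Rightarrow> int) \<Rightarrow> int \<Rightarrow> int \<Rightarrow> int" where
  "translate x a = (\<lambda>i. x (i + a))"

definition back_sum :: "(int \<Rightarrow> int) \<Rightarrow> int \<Rightarrow> nat \<Rightarrow> int" where
  "back_sum x a m = (\<Sum>l\<in>{a - int m..<a}. x l)"

definition has_passage :: "(int \<Rightarrow> int) \<Rightarrow> int \<Rightarrow> bool" where
  "has_passage x a \<longleftrightarrow> (\<exists>m. back_sum x a m < 0)"

definition passage :: "(int \<Rightarrow> int) \<Rightarrow> int \<Rightarrow> nat" where
  "passage x a = (LEAST m. back_sum x a m < 0)"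

definition suffix_sum :: "(int \<Rightarrow> int) \<Rightarrow> int \<Rightarrow> int" where
  "suffix_sum x p = (\<Sum>l\<in>{p..<0}. x l)"

lemma sum_int_interval_split:
  fixes p q r :: int
  assumes "p \<le> q" "q \<le> r"
  shows "(\<Sum>l\<in>{p..<r}. f l) = (\<Sum>l\<in>{p..<q}. f l) + (\<Sum>l\<in>{q..<r}. f l)"
proof -
  have "{p..<r} = {p..<q} \<union> {q..<r}" using assms by auto
  then show ?thesis by (simp add: sum.union_disjoint ivl_disj_int_two(3))
qed

lemma sum_int_interval_translate:
  fixes p q a :: int
  shows "(\<Sum>l\<in>{p..<q}. f (l + a)) = (\<Sum>l\<in>{p+a..<q+a}. f l)"
proof -
  have "(\<lambda>l. l + a) ` {p..<q} = {p+a..<q+a}"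
    by (simp only: image_add_atLeastLessThan')
  then show ?thesis
    by (metis (no_types, lifting) add_right_imp_eq inj_onI sum.reindex_cong)
qed

lemma translate_translate [simp]: "translate (translate x a) b = translate x (b + a)"
  by (simp add: translate_def add.assoc)

lemma translate_0 [simp]: "translate x 0 = x"
  by (simp add: translate_def)

lemma skip_free_translate: "skip_free x \<Longrightarrow> skip_free (translate x a)"
  by (simp add: skip_free_def translate_def)

lemma back_sum_0 [simp]: "back_sum x a 0 = 0"
  by (simp add: back_sum_def)

lemma back_sum_Suc: "back_sum x a (Suc m) = x (a - 1 - int m) + back_sum x a m"
proof -
  have "{a - int (Suc m)..<a} = insert (a - 1 - int m) {a - int m..<a}" by auto
  then show ?thesis by (simp add: back_sum_def)
qed

lemma back_sum_translate: "back_sum (translate x a) b m = back_sum x (b + a) m"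
  unfolding back_sum_def translate_def by (simp add: sum_int_interval_translate algebra_simps)

lemma has_passage_translate: "has_passage (translate x a) b \<longleftrightarrow> has_passage x (b + a)"
  by (simp add: has_passage_def back_sum_translate)

lemma passage_translate: "passage (translate x a) b = passage x (b + a)"
  by (simp add: passage_def back_sum_translate)

lemma back_sum_eq_suffix_sum: "a \<le> 0 \<Longrightarrow> back_sum x a m = suffix_sum x (a - int m) - suffix_sum x a"
  using sum_int_interval_split[of "a - int m" a 0 x] by (simp add: suffix_sum_def back_sum_def)

lemma sum_eq_suffix_sum: "j \<le> n \<Longrightarrow> n \<le> 0 \<Longrightarrow> (\<Sum>l\<in>{j..<n}. x l) = suffix_sum x j - suffix_sum x n"
  using sum_int_interval_split[of j n 0 x] by (simp add: suffix_sum_def)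

lemma suffix_sum_0 [simp]: "suffix_sum x 0 = 0"
  by (simp add: suffix_sum_def)

lemma suffix_sum_minus_1 [simp]: "suffix_sum x (-1) = x (-1)"
proof -
  have "{-1..<0::int} = {-1}" by auto
  then show ?thesis by (simp add: suffix_sum_def)
qed

text \<open>Since the walk moves down by at most one, its first backward passage below zero hits \<open>-1\<close> exactly.\<close>
lemma passage_props:
  assumes "has_passage x a" "skip_free x"
  shows back_sum_passage: "back_sum x a (passage x a) = -1"
    and passage_pos: "passage x a > 0"
    and back_sum_before_passage: "\<And>m. m < passage x a \<Longrightarrow> back_sum x a m \<ge> 0"
proof -
  have neg: "back_sum x a (passage x a) < 0"
    using assms(1) unfolding has_passage_def passage_def by (metis LeastI_ex)
  show before: "\<And>m. m < passage x a \<Longrightarrow> back_sum x a m \<ge> 0"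
    unfolding passage_def using not_less_Least by (metis not_less)
  show "passage x a > 0" using neg by (cases "passage x a") auto
  then obtain m where m: "passage x a = Suc m" using gr0_conv_Suc by blast
  have "back_sum x a m \<ge> 0" using before m by simp
  moreover have "x (a - 1 - int m) \<ge> -1" using assms(2) by (simp add: skip_free_def)
  ultimately show "back_sum x a (passage x a) = -1" using neg m back_sum_Suc[of x a m] by simp
qed

lemma passage_eqI:
  assumes "back_sum x a N < 0" "\<And>m. m < N \<Longrightarrow> back_sum x a m \<ge> 0"
  shows "has_passage x a \<and> passage x a = N"
proof
  show "has_passage x a" using assms(1) by (auto simp: has_passage_def)
  show "passage x a = N" unfolding passage_def
    by (rule Least_equality) (use assms in \<open>auto simp: not_less[symmetric]\<close>)
qed

section \<open>The descendant tree in terms of passages\<close>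

lemma int_least_above:
  fixes j :: int
  assumes "\<exists>n>j. P n"
  obtains w where "j < w" "P w" "\<And>n. j < n \<Longrightarrow> n < w \<Longrightarrow> \<not> P n"
proof -
  from assms obtain n where "n > j" "P n" by blast
  then have "\<exists>d::nat. P (j + 1 + int d)" by (intro exI[of _ "nat (n - j - 1)"]) simp
  then obtain d :: nat where d: "P (j + 1 + int d)" "\<And>d'. d' < d \<Longrightarrow> \<not> P (j + 1 + int d')"
    using exists_least_iff[of "\<lambda>d. P (j + 1 + int d)"] by blast
  show thesis
  proof (rule that[of "j + 1 + int d"])
    fix n assume "j < n" "n < j + 1 + int d"
    then show "\<not> P n" using d(2)[of "nat (n - j - 1)"] by simp
  qed (use d in simp_all)
qed

lemma record_map_eq_iff:
  "record_map x j = v \<longleftrightarrow>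
     (v = j \<and> (\<forall>n>j. (\<Sum>l\<in>{j..<n}. x l) < 0)) \<or>
     (j < v \<and> (\<Sum>l\<in>{j..<v}. x l) \<ge> 0 \<and> (\<forall>n. j < n \<and> n < v \<longrightarrow> (\<Sum>l\<in>{j..<n}. x l) < 0))"
proof (cases "\<exists>n>j. (\<Sum>l\<in>{j..<n}. x l) \<ge> 0")
  case True
  obtain w where w: "j < w" "(\<Sum>l\<in>{j..<w}. x l) \<ge> 0"
    "\<And>n. j < n \<Longrightarrow> n < w \<Longrightarrow> \<not> (\<Sum>l\<in>{j..<n}. x l) \<ge> 0"
    using int_least_above[OF True] by blast
  have "record_map x j = w"
    unfolding record_map_def using True
    by (simp, intro Least_equality) (use w in \<open>auto simp: not_less[symmetric]\<close>)
  moreover have "j < v \<and> (\<Sum>l\<in>{j..<v}. x l) \<ge> 0 \<and> (\<forall>n. j < n \<and> n < v \<longrightarrow> (\<Sum>l\<in>{j..<n}. x l) < 0)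
      \<longleftrightarrow> v = w" for v
    using w by (metis linorder_neqE not_le)
  ultimately show ?thesis
    using True by auto
next
  case False
  then show ?thesis by (auto simp: record_map_def not_le)
qed

lemma record_map_ge: "record_map x j \<ge> j"
  using record_map_eq_iff[of x j "record_map x j"] by auto

lemma funpow_record_map_ge: "(record_map x ^^ n) i \<ge> i"
  by (induction n) (auto intro: order.trans[OF _ record_map_ge])

lemma record_map_translate: "record_map (translate x a) j = record_map x (j + a) - a"
proof -
  have "(\<Sum>l\<in>{j..<n}. translate x a l) = (\<Sum>l\<in>{j+a..<n+a}. x l)" for n
    by (simp add: sum_int_interval_translate translate_def)
  then show ?thesis
    unfolding record_map_eq_iff[of "translate x a" j]
    using record_map_eq_iff[of x "j + a" "record_map x (j + a)"]
    by (auto simp: algebra_simps)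
qed

lemma zero_in_desc0 [simp]: "0 \<in> desc0 x"
  by (simp add: desc0_def)

lemma rchildren_eq:
  assumes "v \<in> desc0 x"
  shows "rchildren x v = {j. record_map x j \<noteq> j \<and> record_map x j = v}"
proof -
  have "j \<in> desc0 x" if j: "record_map x j \<noteq> j" "record_map x j = v" for j
  proof (cases "v = 0")
    case True
    then show ?thesis using j unfolding desc0_def by (auto intro!: exI[of _ 1])
  next
    case False
    then obtain n where n: "n \<ge> 1" "(record_map x ^^ n) v = 0"
      using assms unfolding desc0_def by auto
    then have "(record_map x ^^ Suc n) j = 0"
      using j by (simp add: funpow_Suc_right del: funpow.simps)
    moreover have "j \<noteq> 0"
    proof
      assume "j = 0"
      then have "v > 0" using record_map_ge[where x=x and j=j] j False by auto
      then show False using funpow_record_map_ge[where x=x and n=n and i=v] n by simp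
    qed
    ultimately show ?thesis unfolding desc0_def by (auto intro!: exI[of _ "Suc n"])
  qed
  then show ?thesis unfolding rchildren_def by auto
qed

definition kth_child :: "(int \<Rightarrow> int) \<Rightarrow> int \<Rightarrow> nat \<Rightarrow> int \<Rightarrow> bool" where
  "kth_child x v k j \<longleftrightarrow> j \<in> rchildren x v \<and> finite {j' \<in> rchildren x v. j' < j} \<and>
     k = card {j' \<in> rchildren x v. j' < j}"

lemma kth_child_unique:
  assumes "kth_child x v k j1" "kth_child x v k j2"
  shows "j1 = j2"
proof (rule ccontr)
  have less: False if "kth_child x v k j" "kth_child x v k j'" "j < j'" for j j'
  proof -
    have "{i \<in> rchildren x v. i < j} \<subset> {i \<in> rchildren x v. i < j'}"
      using that unfolding kth_child_def by auto
    then show False using psubset_card_mono that unfolding kth_child_def by (metis less_irrefl)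
  qed
  assume "j1 \<noteq> j2"
  then show False using less assms by (metis linorder_neqE)
qed

lemma kth_child_translate:
  assumes "v \<in> desc0 x" "v - a \<in> desc0 (translate x a)"
  shows "kth_child (translate x a) (v - a) k (j - a) \<longleftrightarrow> kth_child x v k j"
proof -
  have inj: "inj_on (\<lambda>j. j - a) A" for A :: "int set" by (auto simp: inj_on_def)
  have children: "rchildren (translate x a) (v - a) = (\<lambda>j. j - a) ` rchildren x v"
    unfolding rchildren_eq[OF assms(1)] rchildren_eq[OF assms(2)] record_map_translate
    by (auto intro: image_eqI[of _ _ "_ + a"])
  have "{j' \<in> (\<lambda>j. j - a) ` rchildren x v. j' < j - a} = (\<lambda>j. j - a) ` {j' \<in> rchildren x v. j' < j}"
    by auto
  then show ?thesis
    unfolding kth_child_def children by (auto simp: finite_image_iff[OF inj] card_image[OF inj])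
qed

lemma desc_label_in_desc0: "desc_label x u v \<Longrightarrow> v \<in> desc0 x"
  by (induction rule: desc_label.induct) (auto simp: rchildren_def)

lemma desc_label_Nil_iff: "desc_label x [] v \<longleftrightarrow> v = 0"
  by (auto elim: desc_label.cases intro: desc_label.root)

lemma desc_label_snoc_iff:
  "desc_label x (u @ [k]) j \<longleftrightarrow> (\<exists>v. desc_label x u v \<and> kth_child x v k j)"
  unfolding kth_child_def by (auto elim: desc_label.cases intro: desc_label.child)

lemma desc_label_unique: "desc_label x u v \<Longrightarrow> desc_label x u v' \<Longrightarrow> v = v'"
proof (induction u arbitrary: v v' rule: rev_induct)
  case Nil
  then show ?case by (simp add: desc_label_Nil_iff)
next
  case (snoc k u)
  then show ?case unfolding desc_label_snoc_iff by (metis kth_child_unique)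
qed

lemma desc_label_append_iff:
  assumes "desc_label x u v"
  shows "desc_label x (u @ w) j \<longleftrightarrow> desc_label (translate x v) w (j - v)"
proof (induction w arbitrary: j rule: rev_induct)
  case Nil
  have "desc_label x u j \<longleftrightarrow> j = v" using desc_label_unique[OF assms] assms by blast
  then show ?case by (simp add: desc_label_Nil_iff)
next
  case (snoc k w)
  have "desc_label x (u @ w @ [k]) j \<longleftrightarrow> (\<exists>v'. desc_label x (u @ w) v' \<and> kth_child x v' k j)"
    using desc_label_snoc_iff[of x "u @ w"] by simp
  also have "\<dots> \<longleftrightarrow> (\<exists>v'. desc_label (translate x v) w (v' - v) \<and>
                          kth_child (translate x v) (v' - v) k (j - v))"
  proof (intro ex_cong1)
    fix v'
    have "desc_label x (u @ w) v' \<longleftrightarrow> desc_label (translate x v) w (v' - v)"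
      by (rule snoc.IH)
    then show "desc_label x (u @ w) v' \<and> kth_child x v' k j \<longleftrightarrow>
        desc_label (translate x v) w (v' - v) \<and> kth_child (translate x v) (v' - v) k (j - v)"
      using kth_child_translate[where v=v' and a=v] desc_label_in_desc0 by blast
  qed
  also have "\<dots> \<longleftrightarrow> desc_label (translate x v) (w @ [k]) (j - v)"
  proof -
    have "(\<exists>v'. P (v' - v)) \<longleftrightarrow> (\<exists>v''. P v'')" for P :: "int \<Rightarrow> bool"
      by (metis add_diff_cancel_right')
    then show ?thesis by (simp add: desc_label_snoc_iff)
  qed
  finally show ?case by simp
qed

lemma desc_label_prefix: "desc_label x (u @ w) j \<Longrightarrow> \<exists>v. desc_label x u v"
  by (induction w arbitrary: j rule: rev_induct) (auto simp: desc_label_snoc_iff simp flip: append_assoc)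

lemma Nil_in_desc_tree [simp]: "[] \<in> desc_tree x"
  by (auto simp: desc_tree_def intro: desc_label.root)

lemma Cons_in_desc_tree_iff:
  "k # w \<in> desc_tree x \<longleftrightarrow> (\<exists>c. desc_label x [k] c \<and> w \<in> desc_tree (translate x c))"
proof
  assume "k # w \<in> desc_tree x"
  then obtain j where j: "desc_label x ([k] @ w) j" by (auto simp: desc_tree_def)
  then obtain c where c: "desc_label x [k] c" using desc_label_prefix by blast
  moreover have "desc_label (translate x c) w (j - c)"
    using desc_label_append_iff[OF c] j by blast
  ultimately show "\<exists>c. desc_label x [k] c \<and> w \<in> desc_tree (translate x c)"
    by (auto simp: desc_tree_def)
next
  assume "\<exists>c. desc_label x [k] c \<and> w \<in> desc_tree (translate x c)"
  then obtain c j where c: "desc_label x [k] c" "desc_label (translate x c) w j"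
    by (auto simp: desc_tree_def)
  then have "desc_label x ([k] @ w) (j + c)" using desc_label_append_iff[OF c(1), of w "j + c"] by simp
  then show "k # w \<in> desc_tree x" by (auto simp: desc_tree_def)
qed

definition root_degree :: "(int \<Rightarrow> int) \<Rightarrow> nat" where
  "root_degree x = nat (x (-1) + 1)"

lemma root_degree_eq:
  assumes "skip_free x"
  shows "x (-1) = int (root_degree x) - 1"
proof -
  have "x (-1) \<ge> -1" using assms by (simp add: skip_free_def)
  then show ?thesis by (simp add: root_degree_def)
qed

fun passage_chain :: "(int \<Rightarrow> int) \<Rightarrow> int \<Rightarrow> nat \<Rightarrow> int" where
  "passage_chain x a 0 = a"
| "passage_chain x a (Suc r) = passage_chain x a r - int (passage x (passage_chain x a r))"

lemma passage_chain_Suc': "passage_chain x a (Suc r) = passage_chain x (a - int (passage x a)) r"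
  by (induction r) auto

lemma in_rchildren_0_iff:
  "j \<in> rchildren x 0 \<longleftrightarrow>
     j < 0 \<and> suffix_sum x j \<ge> 0 \<and> (\<forall>n. j < n \<and> n < 0 \<longrightarrow> suffix_sum x n > suffix_sum x j)"
proof -
  have "j \<in> rchildren x 0 \<longleftrightarrow>
      j < 0 \<and> (\<Sum>l\<in>{j..<0}. x l) \<ge> 0 \<and> (\<forall>n. j < n \<and> n < 0 \<longrightarrow> (\<Sum>l\<in>{j..<n}. x l) < 0)"
    unfolding rchildren_eq[OF zero_in_desc0] using record_map_eq_iff[of x j 0] by auto
  moreover have "(\<Sum>l\<in>{j..<n}. x l) = suffix_sum x j - suffix_sum x n" if "j < n" "n < 0" for n
    using sum_eq_suffix_sum that by simp
  ultimately show ?thesis by (auto simp: suffix_sum_def)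
qed

text \<open>The chain started at \<open>-1\<close> descends through the levels \<open>K - 1, K - 2, \<dots>\<close> of the
  backward walk, each time to the first point strictly below the current level.\<close>
lemma passage_chain_invariant:
  assumes "skip_free x" "r \<le> root_degree x"
    and "\<forall>r'<r. has_passage x (passage_chain x (-1) r')"
  shows "suffix_sum x (passage_chain x (-1) r) = int (root_degree x) - 1 - int r \<and>
    (\<forall>p. passage_chain x (-1) r < p \<and> p < 0 \<longrightarrow> suffix_sum x p \<ge> int (root_degree x) - int r) \<and>
    passage_chain x (-1) r \<le> -1"
  using assms(2,3)
proof (induction r)
  case 0
  then show ?case using root_degree_eq[OF assms(1)] by simp
next
  case (Suc r)
  define c where "c = passage_chain x (-1) r"
  define h where "h = passage x c"
  have IH: "suffix_sum x c = int (root_degree x) - 1 - int r"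
    "\<And>p. c < p \<Longrightarrow> p < 0 \<Longrightarrow> suffix_sum x p \<ge> int (root_degree x) - int r" "c \<le> -1"
    using Suc unfolding c_def by auto
  have "has_passage x c" using Suc.prems unfolding c_def by auto
  note passage = passage_props[OF this assms(1), folded h_def]
  have next_c: "passage_chain x (-1) (Suc r) = c - int h" unfolding c_def h_def by simp
  have "suffix_sum x p \<ge> int (root_degree x) - int (Suc r)" if p: "c - int h < p" "p < 0" for p
  proof (cases "c < p")
    case True
    then show ?thesis using IH(2)[OF True p(2)] by simp
  next
    case False
    then have "nat (c - p) < h" "p = c - int (nat (c - p))" using p by auto
    then show ?thesis
      using passage(3) back_sum_eq_suffix_sum[of c x "nat (c - p)"] IH(1,3) by fastforce
  qed
  moreover have "suffix_sum x (c - int h) = int (root_degree x) - 1 - int (Suc r)"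
    using passage(1) back_sum_eq_suffix_sum[of c x h] IH(1,3) by simp
  ultimately show ?case using next_c IH(3) by auto
qed

lemma has_passage_chain:
  assumes "skip_free x" "has_passage x 0" "r < root_degree x"
  shows "has_passage x (passage_chain x (-1) r)"
  using assms(3)
proof (induction r rule: less_induct)
  case (less r)
  define c where "c = passage_chain x (-1) r"
  have inv: "suffix_sum x c = int (root_degree x) - 1 - int r"
    "\<And>p. c < p \<Longrightarrow> p < 0 \<Longrightarrow> suffix_sum x p \<ge> int (root_degree x) - int r" "c \<le> -1"
    using passage_chain_invariant[OF assms(1), of r] less unfolding c_def by auto
  obtain m where "back_sum x 0 m < 0" using assms(2) unfolding has_passage_def by auto
  then have neg: "suffix_sum x (- int m) < 0" using back_sum_eq_suffix_sum[of 0 x m] by simp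
  have "- int m < c"
  proof (rule ccontr)
    assume "\<not> - int m < c"
    then consider "- int m = c" | "c < - int m" "- int m < 0" | "m = 0" by linarith
    then show False using inv(1) inv(2)[of "- int m"] neg less.prems by cases auto
  qed
  then have "back_sum x c (nat (c + int m)) < 0"
    using back_sum_eq_suffix_sum[of c x "nat (c + int m)"] inv(1,3) neg less.prems by simp
  then show ?case unfolding c_def has_passage_def by blast
qed

lemma passage_chain_root_degree:
  assumes "skip_free x" "has_passage x 0"
  shows "passage_chain x (-1) (root_degree x) = - int (passage x 0)"
proof -
  define c where "c = passage_chain x (-1) (root_degree x)"
  have inv: "suffix_sum x c = -1" "\<And>p. c < p \<Longrightarrow> p < 0 \<Longrightarrow> suffix_sum x p \<ge> 0" "c \<le> -1"
    using passage_chain_invariant[OF assms(1) order.refl] has_passage_chain[OF assms]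
    unfolding c_def by auto
  have "passage x 0 = nat (- c)"
  proof (rule passage_eqI[THEN conjunct2])
    show "back_sum x 0 (nat (- c)) < 0"
      using back_sum_eq_suffix_sum[of 0 x "nat (- c)"] inv(1,3) by simp
    show "back_sum x 0 m \<ge> 0" if "m < nat (- c)" for m
      using that inv(2)[of "- int m"] back_sum_eq_suffix_sum[of 0 x m] by (cases "m = 0") auto
  qed
  then show ?thesis using inv(3) unfolding c_def by simp
qed

lemma has_passage_0_iff:
  assumes "skip_free x"
  shows "has_passage x 0 \<longleftrightarrow> (\<forall>r < root_degree x. has_passage x (passage_chain x (-1) r))"
proof
  assume "\<forall>r < root_degree x. has_passage x (passage_chain x (-1) r)"
  then have "suffix_sum x (passage_chain x (-1) (root_degree x)) = -1"
    "passage_chain x (-1) (root_degree x) \<le> -1"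
    using passage_chain_invariant[OF assms order.refl] by auto
  then have "back_sum x 0 (nat (- passage_chain x (-1) (root_degree x))) < 0"
    using back_sum_eq_suffix_sum[of 0 x] by simp
  then show "has_passage x 0" unfolding has_passage_def by blast
qed (use has_passage_chain[OF assms] in blast)

lemma passage_chain_decreasing:
  assumes "skip_free x" "has_passage x 0" "r < r'" "r' \<le> root_degree x"
  shows "passage_chain x (-1) r' < passage_chain x (-1) r"
  using assms(3,4)
proof (induction r')
  case (Suc r')
  have "passage x (passage_chain x (-1) r') > 0"
    using has_passage_chain[OF assms(1,2)] passage_pos assms(1) Suc.prems by simp
  then show ?case using Suc by (cases "r = r'") auto
qed simp

lemma passage_chain_block_bounds:
  assumes "skip_free x" "has_passage x 0" "r < root_degree x"
  shows "- int (passage x 0) \<le> passage_chain x (-1) r - int (passage x (passage_chain x (-1) r))"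
    and "passage_chain x (-1) r \<le> 0"
proof -
  let ?c = "passage_chain x (-1)" and ?K = "root_degree x"
  have "?c ?K \<le> ?c (Suc r)"
    using passage_chain_decreasing[OF assms(1,2), of "Suc r" ?K] assms(3)
    by (cases "Suc r = ?K") auto
  then show "- int (passage x 0) \<le> ?c r - int (passage x (?c r))"
    using passage_chain_root_degree[OF assms(1,2)] by simp
  show "?c r \<le> 0"
    using passage_chain_invariant[OF assms(1), of r] has_passage_chain[OF assms(1,2)] assms(3) by auto
qed

lemma bracketing_index:
  fixes f :: "nat \<Rightarrow> int"
  assumes "f K < j" "j \<le> f 0"
  shows "\<exists>r<K. f (Suc r) < j \<and> j \<le> f r"
  using assms(1)
proof (induction K)
  case 0
  then show ?case using assms(2) by simp
next
  case (Suc K)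
  show ?case
  proof (cases "f K < j")
    case True
    then show ?thesis using Suc.IH less_SucI by blast
  next
    case False
    then show ?thesis using Suc.prems by (intro exI[of _ K]) auto
  qed
qed

lemma rchildren_0_eq:
  assumes "skip_free x" "has_passage x 0"
  shows "rchildren x 0 = passage_chain x (-1) ` {..<root_degree x}"
proof (intro set_eqI iffI)
  let ?c = "passage_chain x (-1)" and ?K = "root_degree x"
  have inv: "suffix_sum x (?c r) = int ?K - 1 - int r"
    "\<And>p. ?c r < p \<Longrightarrow> p < 0 \<Longrightarrow> suffix_sum x p \<ge> int ?K - int r" "?c r \<le> -1"
    if "r \<le> ?K" for r
    using passage_chain_invariant[OF assms(1) that] has_passage_chain[OF assms] that by auto
  fix j
  show "j \<in> rchildren x 0" if "j \<in> ?c ` {..<?K}"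
  proof -
    obtain r where "r < ?K" "j = ?c r" using \<open>j \<in> ?c ` {..<?K}\<close> by blast
    then show ?thesis using inv[of r] by (fastforce simp: in_rchildren_0_iff)
  qed
  assume "j \<in> rchildren x 0"
  then have j: "j < 0" "suffix_sum x j \<ge> 0" "\<And>n. j < n \<Longrightarrow> n < 0 \<Longrightarrow> suffix_sum x n > suffix_sum x j"
    by (auto simp: in_rchildren_0_iff)
  have "?c ?K < j"
  proof (rule ccontr)
    assume "\<not> ?c ?K < j"
    then have "j < ?c ?K \<or> j = ?c ?K" by auto
    then show False using j(2) j(3)[of "?c ?K"] inv(1,3)[OF order.refl] by auto
  qed
  then obtain r where r: "r < ?K" "?c (Suc r) < j" "j \<le> ?c r"
    using bracketing_index[of ?c ?K j] j(1) by auto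
  have "j = ?c r"
  proof (rule ccontr)
    assume "j \<noteq> ?c r"
    then have "suffix_sum x (?c r) > suffix_sum x j" using j(3) r(3) inv(3)[of r] r(1) by simp
    moreover have "suffix_sum x j \<ge> int ?K - int (Suc r)" using inv(2)[of "Suc r"] r j(1) by simp
    ultimately show False using inv(1)[of r] r(1) by simp
  qed
  then show "j \<in> ?c ` {..<?K}" using r(1) by auto
qed

lemma desc_label_singleton_iff:
  assumes "skip_free x" "has_passage x 0"
  shows "desc_label x [k] c \<longleftrightarrow>
    k < root_degree x \<and> c = passage_chain x (-1) (root_degree x - 1 - k)"
proof -
  let ?c = "passage_chain x (-1)" and ?K = "root_degree x"
  have inj: "inj_on ?c {..?K}"
  proof (rule inj_onI)
    fix r r' assume "r \<in> {..?K}" "r' \<in> {..?K}" "?c r = ?c r'"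
    then show "r = r'"
      using passage_chain_decreasing[OF assms, of r r'] passage_chain_decreasing[OF assms, of r' r]
      by (cases r r' rule: linorder_cases) auto
  qed
  have below: "{j \<in> rchildren x 0. j < ?c r} = ?c ` {r<..<?K}" if "r < ?K" for r
  proof -
    have "?c r' < ?c r \<longleftrightarrow> r < r'" if "r' < ?K" for r'
      using passage_chain_decreasing[OF assms, of r r'] passage_chain_decreasing[OF assms, of r' r]
        that \<open>r < ?K\<close> by (cases r r' rule: linorder_cases) auto
    then show ?thesis unfolding rchildren_0_eq[OF assms] by auto
  qed
  have card: "card (?c ` {r<..<?K}) = ?K - 1 - r" for r
    using inj by (subst card_image) (auto intro: inj_on_subset)
  have "desc_label x [k] c \<longleftrightarrow> kth_child x 0 k c"
    using desc_label_snoc_iff[of x "[]" k c] by (simp add: desc_label_Nil_iff)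
  also have "\<dots> \<longleftrightarrow> (\<exists>r<?K. c = ?c r \<and> k = ?K - 1 - r)"
    unfolding kth_child_def using below card rchildren_0_eq[OF assms] by auto
  also have "\<dots> \<longleftrightarrow> k < ?K \<and> c = ?c (?K - 1 - k)"
    by (auto intro!: exI[of _ "?K - 1 - k"])
  finally show ?thesis .
qed

lemma trunc_desc_tree_0: "trunc (desc_tree x) 0 = {[]}"
  by (auto simp: trunc_def)

lemma trunc_desc_tree_Suc:
  assumes "skip_free x" "has_passage x 0"
  shows "trunc (desc_tree x) (Suc n) = insert []
    {k # w | k w. k < root_degree x \<and>
       w \<in> trunc (desc_tree (translate x (passage_chain x (-1) (root_degree x - 1 - k)))) n}"
    (is "_ = insert [] {k # w | k w. k < _ \<and> w \<in> ?sub k}")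
proof (intro set_eqI)
  fix u
  show "u \<in> trunc (desc_tree x) (Suc n) \<longleftrightarrow> u \<in> insert [] {k # w | k w. k < root_degree x \<and> w \<in> ?sub k}"
  proof (cases u)
    case (Cons k w)
    have "k # w \<in> desc_tree x \<longleftrightarrow>
        k < root_degree x \<and> w \<in> desc_tree (translate x (passage_chain x (-1) (root_degree x - 1 - k)))"
      unfolding Cons_in_desc_tree_iff desc_label_singleton_iff[OF assms] by auto
    then show ?thesis using Cons by (simp add: trunc_def)
  qed (simp add: trunc_def)
qed

section \<open>Plane trees\<close>

definition subtree :: "nat list set \<Rightarrow> nat \<Rightarrow> nat list set" where
  "subtree t k = {w. k # w \<in> t}"

definition gw_weight :: "(nat \<Rightarrow> real) \<Rightarrow> nat list set \<Rightarrow> nat \<Rightarrow> real" where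
  "gw_weight \<pi> t n = (\<Prod>u\<in>{u \<in> t. length u < n}. \<pi> (nchild t u))"

lemma plane_tree_prefix: "plane_tree t \<Longrightarrow> u @ w \<in> t \<Longrightarrow> u \<in> t"
proof (induction w rule: rev_induct)
  case (snoc k w)
  then show ?case unfolding plane_tree_def by (metis append_assoc)
qed simp

lemma finite_subtree: "finite t \<Longrightarrow> finite (subtree t k)"
proof -
  have "subtree t k = tl ` {u \<in> t. u \<noteq> [] \<and> hd u = k}"
    unfolding subtree_def by (force intro: image_eqI[of _ _ "k # _"])
  then show "finite t \<Longrightarrow> finite (subtree t k)" by simp
qed

lemma nchild_Cons: "nchild t (k # w) = nchild (subtree t k) w"
  by (simp add: nchild_def subtree_def)

lemma down_closed_eq_lessThan:
  fixes A :: "nat set"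
  assumes "finite A" "\<And>k k'. k \<in> A \<Longrightarrow> k' < k \<Longrightarrow> k' \<in> A"
  shows "A = {..<card A}"
proof (cases "A = {}")
  case False
  then have "Max A \<in> A" using assms(1) by simp
  then have "A = {..Max A}"
    using Max_ge[OF assms(1)] assms(2) by (auto simp: le_less)
  then show ?thesis by (metis card_atMost lessThan_Suc_atMost)
qed simp

lemma plane_tree_root_children:
  assumes "plane_tree t" "finite t"
  shows "{k. [k] \<in> t} = {..<nchild t []}"
proof -
  have "{k. [k] \<in> t} \<subseteq> hd ` t" by (auto intro: image_eqI[of _ _ "[_]"])
  then have "finite {k. [k] \<in> t}" using assms(2) finite_surj by blast
  moreover have "\<And>k k'. [k] \<in> t \<Longrightarrow> k' < k \<Longrightarrow> [k'] \<in> t"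
    using assms(1) unfolding plane_tree_def by (metis append_Nil)
  ultimately show ?thesis
    unfolding nchild_def by (simp, intro down_closed_eq_lessThan) auto
qed

lemma Cons_in_plane_tree_iff:
  assumes "plane_tree t" "finite t"
  shows "k # w \<in> t \<longleftrightarrow> k < nchild t [] \<and> w \<in> subtree t k"
  using plane_tree_prefix[OF assms(1), of "[k]" w] plane_tree_root_children[OF assms]
  by (auto simp: subtree_def)

lemma plane_tree_decomp:
  assumes "plane_tree t" "finite t"
  shows "t = insert [] {k # w | k w. k < nchild t [] \<and> w \<in> subtree t k}"
proof (intro set_eqI)
  fix u
  show "u \<in> t \<longleftrightarrow> u \<in> insert [] {k # w | k w. k < nchild t [] \<and> w \<in> subtree t k}"
    using Cons_in_plane_tree_iff[OF assms] assms(1) by (cases u) (auto simp: plane_tree_def)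
qed

lemma plane_tree_subtree:
  assumes "plane_tree t" "finite t" "k < nchild t []"
  shows "plane_tree (subtree t k)"
proof -
  have "[] \<in> subtree t k"
    using assms plane_tree_root_children unfolding subtree_def by blast
  moreover have "u \<in> subtree t k" "\<forall>j'<j. u @ [j'] \<in> subtree t k"
    if "u @ [j] \<in> subtree t k" for u j
  proof -
    have "(k # u) @ [j] \<in> t" using that by (simp add: subtree_def)
    then have "k # u \<in> t" "\<forall>j'<j. (k # u) @ [j'] \<in> t"
      using assms(1) unfolding plane_tree_def by blast+
    then show "u \<in> subtree t k" "\<forall>j'<j. u @ [j'] \<in> subtree t k" by (simp_all add: subtree_def)
  qed
  ultimately show ?thesis unfolding plane_tree_def by blast
qed

lemma gw_weight_Suc:
  assumes "plane_tree t" "finite t"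
  shows "gw_weight \<pi> t (Suc n) = \<pi> (nchild t []) * (\<Prod>k<nchild t []. gw_weight \<pi> (subtree t k) n)"
proof -
  define K where "K = nchild t []"
  define low where "low k = {w \<in> subtree t k. length w < n}" for k
  have fin: "finite (low k)" for k
    unfolding low_def using finite_subtree[OF assms(2)] by simp
  have split: "{u \<in> t. length u < Suc n} = insert [] (\<Union>k<K. Cons k ` low k)"
  proof (intro set_eqI)
    fix u
    show "u \<in> {u \<in> t. length u < Suc n} \<longleftrightarrow> u \<in> insert [] (\<Union>k<K. Cons k ` low k)"
      using Cons_in_plane_tree_iff[OF assms] assms(1)
      unfolding K_def low_def plane_tree_def by (cases u) auto
  qed
  then have "gw_weight \<pi> t (Suc n) = \<pi> (nchild t []) * (\<Prod>u\<in>(\<Union>k<K. Cons k ` low k). \<pi> (nchild t u))"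
    unfolding gw_weight_def split using fin by (subst prod.insert) auto
  also have "(\<Prod>u\<in>(\<Union>k<K. Cons k ` low k). \<pi> (nchild t u)) = (\<Prod>k<K. \<Prod>u\<in>Cons k ` low k. \<pi> (nchild t u))"
    by (rule prod.UNION_disjoint) (auto intro: fin)
  also have "\<dots> = (\<Prod>k<K. gw_weight \<pi> (subtree t k) n)"
    unfolding gw_weight_def low_def
    by (rule prod.cong[OF refl], subst prod.reindex) (auto simp: nchild_Cons)
  finally show ?thesis unfolding K_def .
qed

section \<open>Decomposition at the root\<close>

definition closed_trunc :: "nat \<Rightarrow> nat list set \<Rightarrow> (int \<Rightarrow> int) \<Rightarrow> bool" where
  "closed_trunc n t x \<longleftrightarrow> has_passage x 0 \<and> trunc (desc_tree x) n = t"

fun forest :: "nat list set list \<Rightarrow> nat \<Rightarrow> (int \<Rightarrow> int) \<Rightarrow> bool" where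
  "forest [] n x \<longleftrightarrow> True"
| "forest (t # ts) n x \<longleftrightarrow> closed_trunc n t x \<and> forest ts n (translate x (- int (passage x 0)))"

lemma closed_trunc_translate:
  "closed_trunc n t (translate x a) \<longleftrightarrow> has_passage x a \<and> trunc (desc_tree (translate x a)) n = t"
  by (simp add: closed_trunc_def has_passage_translate)

lemma forest_translate_iff:
  "forest ts n (translate x a) \<longleftrightarrow>
    (\<forall>r<length ts. closed_trunc n (ts ! r) (translate x (passage_chain x a r)))"
proof (induction ts arbitrary: a)
  case (Cons t ts)
  have "forest (t # ts) n (translate x a) \<longleftrightarrow>
      closed_trunc n t (translate x a) \<and> forest ts n (translate x (a - int (passage x a)))"
    by (simp add: passage_translate)
  also have "\<dots> \<longleftrightarrow> (\<forall>r<length (t # ts). closed_trunc n ((t # ts) ! r) (translate x (passage_chain x a r)))"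
    unfolding Cons.IH passage_chain_Suc'[symmetric] by (auto simp: less_Suc_eq_0_disj)
  finally show ?case .
qed simp

lemma all_less_flip_iff: "(\<forall>r<K. P (K - Suc r) r) \<longleftrightarrow> (\<forall>k<K. P k (K - Suc k))"
proof -
  have *: "(\<forall>k<K. Q (K - Suc k) k) \<Longrightarrow> (\<forall>k<K. Q k (K - Suc k))" for Q :: "nat \<Rightarrow> nat \<Rightarrow> bool"
  proof (intro allI impI)
    fix k assume "\<forall>r<K. Q (K - Suc r) r" "k < K"
    moreover have "K - Suc k < K" using \<open>k < K\<close> by simp
    ultimately have "Q (K - Suc (K - Suc k)) (K - Suc k)" by blast
    then show "Q k (K - Suc k)" using \<open>k < K\<close> by (simp add: Suc_diff_Suc)
  qed
  show ?thesis using *[of P] *[of "\<lambda>a b. P b a"] by blast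
qed

lemma forest_subtrees_iff:
  "forest (map (subtree t) (rev [0..<K])) n (translate x (-1)) \<longleftrightarrow>
    (\<forall>k<K. closed_trunc n (subtree t k) (translate x (passage_chain x (-1) (K - 1 - k))))"
  unfolding forest_translate_iff
  using all_less_flip_iff[of K "\<lambda>k r. closed_trunc n (subtree t k) (translate x (passage_chain x (-1) r))"]
  by (simp add: rev_nth)

text \<open>Children are labelled from left to right, so the block next to \<open>0\<close> carries the last
  subtree; hence the reversal.\<close>
lemma closed_trunc_Suc_iff:
  assumes "skip_free x" "plane_tree t" "finite t"
  defines "K \<equiv> nchild t []"
  shows "closed_trunc (Suc n) t x \<longleftrightarrow>
    root_degree x = K \<and> forest (map (subtree t) (rev [0..<K])) n (translate x (-1))"
proof -
  let ?c = "passage_chain x (-1)"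
  show ?thesis
  proof
    assume "closed_trunc (Suc n) t x"
    then have "has_passage x 0" and tree: "t = trunc (desc_tree x) (Suc n)"
      by (auto simp: closed_trunc_def)
    note t_eq = tree[unfolded trunc_desc_tree_Suc[OF assms(1) \<open>has_passage x 0\<close>]]
    have "{k. [k] \<in> t} = {..<root_degree x}" by (subst t_eq) (auto simp: trunc_def)
    then have K: "root_degree x = K"
      using plane_tree_root_children[OF assms(2,3)] unfolding K_def by (metis lessThan_eq_iff)
    have "subtree t k = trunc (desc_tree (translate x (?c (K - 1 - k)))) n" if "k < K" for k
      using that K by (subst t_eq) (auto simp: subtree_def)
    moreover have "has_passage x (?c r)" if "r < K" for r
      using has_passage_chain[OF assms(1) \<open>has_passage x 0\<close>] that K by simp
    ultimately show "root_degree x = K \<and> forest (map (subtree t) (rev [0..<K])) n (translate x (-1))"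
      unfolding forest_subtrees_iff using K by (simp add: closed_trunc_translate)
  next
    assume "root_degree x = K \<and> forest (map (subtree t) (rev [0..<K])) n (translate x (-1))"
    then have K: "root_degree x = K"
      and sub: "\<And>k. k < K \<Longrightarrow> closed_trunc n (subtree t k) (translate x (?c (K - 1 - k)))"
      unfolding forest_subtrees_iff by auto
    have "has_passage x (?c r)" if "r < K" for r
      using sub[of "K - 1 - r"] that by (simp add: closed_trunc_translate)
    then have "has_passage x 0" using has_passage_0_iff[OF assms(1)] K by simp
    then have "trunc (desc_tree x) (Suc n) = insert [] {k # w | k w. k < K \<and> w \<in> subtree t k}"
      unfolding trunc_desc_tree_Suc[OF assms(1) \<open>has_passage x 0\<close>] K using sub
      by (auto simp: closed_trunc_translate intro!: arg_cong[where f="insert []"])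
    then show "closed_trunc (Suc n) t x"
      using plane_tree_decomp[OF assms(2,3)] \<open>has_passage x 0\<close> unfolding K_def closed_trunc_def by simp
  qed
qed

section \<open>Dependence on finite windows\<close>

definition agree :: "(int \<Rightarrow> int) \<Rightarrow> (int \<Rightarrow> int) \<Rightarrow> int \<Rightarrow> int \<Rightarrow> bool" where
  "agree x y lo hi \<longleftrightarrow> (\<forall>i. lo \<le> i \<and> i < hi \<longrightarrow> x i = y i)"

lemma agree_mono: "agree x y lo hi \<Longrightarrow> lo \<le> lo' \<Longrightarrow> hi' \<le> hi \<Longrightarrow> agree x y lo' hi'"
  by (auto simp: agree_def)

lemma agree_translate: "agree x y (lo + a) (hi + a) \<Longrightarrow> agree (translate x a) (translate y a) lo hi"
  by (auto simp: agree_def translate_def)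

lemma passage_agree:
  assumes "skip_free x" "has_passage x a" "agree x y (a - int (passage x a)) a"
  shows "has_passage y a \<and> passage y a = passage x a"
proof (rule passage_eqI)
  have same: "back_sum y a m = back_sum x a m" if "m \<le> passage x a" for m
    using agree_mono[OF assms(3), of "a - int m" a] that
    unfolding back_sum_def agree_def by (intro sum.cong) auto
  show "back_sum y a (passage x a) < 0"
    using same back_sum_passage[OF assms(2,1)] by simp
  show "back_sum y a m \<ge> 0" if "m < passage x a" for m
    using same back_sum_before_passage[OF assms(2,1)] that by simp
qed

text \<open>The truncated descendant tree of \<open>0\<close> only depends on the block
  \<open>[-passage x 0, 0)\<close>, because every child of \<open>0\<close> sits at a chain point inside it and its own
  subtree lives on the following, shorter block.\<close>
lemma closed_trunc_agree:
  assumes "skip_free x" "skip_free y" "has_passage x 0" "agree x y (- int (passage x 0)) 0"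
  shows "has_passage y 0 \<and> passage y 0 = passage x 0 \<and> trunc (desc_tree y) n = trunc (desc_tree x) n"
  using assms
proof (induction n arbitrary: x y)
  case 0
  then show ?case using passage_agree[of x 0 y] by (simp add: trunc_desc_tree_0)
next
  case (Suc n)
  let ?c = "passage_chain x (-1)" and ?K = "root_degree x"
  have y: "has_passage y 0" "passage y 0 = passage x 0"
    using passage_agree[of x 0 y] Suc.prems by auto
  have "y (-1) = x (-1)"
    using Suc.prems(4) passage_pos[OF Suc.prems(3,1)] unfolding agree_def by auto
  then have degree: "root_degree y = ?K" by (simp add: root_degree_def)
  have chain: "has_passage x (?c r)" if "r < ?K" for r
    using has_passage_chain[OF Suc.prems(1,3) that] .
  have block: "agree x y (?c r - int (passage x (?c r))) (?c r)" if "r < ?K" for r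
    using agree_mono[OF Suc.prems(4)] passage_chain_block_bounds[OF Suc.prems(1,3) that] by blast
  have same_chain: "passage_chain y (-1) r = ?c r" if "r \<le> ?K" for r
    using that
  proof (induction r)
    case (Suc r)
    then show ?case using passage_agree[OF \<open>skip_free x\<close> chain[of r] block[of r]] by simp
  qed simp
  have same_subtree: "trunc (desc_tree (translate y (?c r))) n = trunc (desc_tree (translate x (?c r))) n"
    if "r < ?K" for r
  proof -
    have "has_passage (translate x (?c r)) 0"
      using chain[OF that] by (simp add: has_passage_translate)
    moreover have "agree (translate x (?c r)) (translate y (?c r))
        (- int (passage (translate x (?c r)) 0)) 0"
      using block[OF that] by (intro agree_translate) (simp add: passage_translate)
    ultimately show ?thesis
      using Suc.IH Suc.prems(1,2) skip_free_translate by blast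
  qed
  have "trunc (desc_tree y) (Suc n) = trunc (desc_tree x) (Suc n)"
    unfolding trunc_desc_tree_Suc[OF Suc.prems(1,3)] trunc_desc_tree_Suc[OF Suc.prems(2) y(1)] degree
    using same_subtree same_chain by (auto intro!: arg_cong[where f="insert []"])
  then show ?case using y by simp
qed

definition window_determined :: "((int \<Rightarrow> int) \<Rightarrow> bool) \<Rightarrow> nat \<Rightarrow> bool" where
  "window_determined Q N \<longleftrightarrow>
     (\<forall>x y. skip_free x \<longrightarrow> skip_free y \<longrightarrow> agree x y (- int N) 0 \<longrightarrow> Q x \<longrightarrow> Q y)"

lemma window_determined_closed_trunc:
  "window_determined (\<lambda>x. closed_trunc n t x \<and> passage x 0 = N) N"
  unfolding window_determined_def closed_trunc_def using closed_trunc_agree by metis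

lemma window_determined_root_degree: "window_determined (\<lambda>x. root_degree x = K) 1"
  unfolding window_determined_def agree_def root_degree_def by auto

lemma window_determined_conj_translate:
  assumes "window_determined Q N" "window_determined R L"
  shows "window_determined (\<lambda>x. Q x \<and> R (translate x (- int N))) (N + L)"
  unfolding window_determined_def
proof (intro allI impI)
  fix x y
  assume x: "skip_free x" "skip_free y" "agree x y (- int (N + L)) 0" "Q x \<and> R (translate x (- int N))"
  have "Q y"
    using assms(1) x agree_mono[OF x(3), of "- int N" 0] unfolding window_determined_def by auto
  moreover have "agree (translate x (- int N)) (translate y (- int N)) (- int L) 0"
    by (rule agree_translate) (rule agree_mono[OF x(3)], auto)
  then have "R (translate y (- int N))"
    using assms(2) x skip_free_translate unfolding window_determined_def by blast
  ultimately show "Q y \<and> R (translate y (- int N))" by simp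
qed

lemma window_determined_ex:
  assumes "\<And>N. N \<le> M \<Longrightarrow> window_determined (Q N) M"
  shows "window_determined (\<lambda>x. \<exists>N\<le>M. Q N x) M"
  using assms unfolding window_determined_def by blast

text \<open>\<open>forest_on ts n x M\<close> refines \<open>forest ts n x\<close> by the total length \<open>M\<close> of the blocks, which
  makes it depend on a finite window.\<close>
fun forest_on :: "nat list set list \<Rightarrow> nat \<Rightarrow> (int \<Rightarrow> int) \<Rightarrow> nat \<Rightarrow> bool" where
  "forest_on [] n x M \<longleftrightarrow> M = 0"
| "forest_on (t # ts) n x M \<longleftrightarrow>
     (\<exists>N\<le>M. (closed_trunc n t x \<and> passage x 0 = N) \<and> forest_on ts n (translate x (- int N)) (M - N))"

lemma window_determined_forest_on: "window_determined (\<lambda>x. forest_on ts n x M) M"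
proof (induction ts arbitrary: M)
  case Nil
  show ?case unfolding window_determined_def by simp
next
  case (Cons t ts)
  have "window_determined (\<lambda>x. (closed_trunc n t x \<and> passage x 0 = N) \<and>
      forest_on ts n (translate x (- int N)) (M - N)) M" if "N \<le> M" for N
    using window_determined_conj_translate[OF window_determined_closed_trunc[of n t N] Cons.IH[of "M - N"]]
      that by simp
  then show ?case unfolding forest_on.simps by (rule window_determined_ex)
qed

lemma forest_iff_ex_forest_on: "forest ts n x \<longleftrightarrow> (\<exists>M. forest_on ts n x M)"
proof (induction ts arbitrary: x)
  case (Cons t ts)
  show ?case
  proof
    assume "forest (t # ts) n x"
    then obtain M where "closed_trunc n t x" "forest_on ts n (translate x (- int (passage x 0))) M"
      using Cons.IH by auto
    then have "forest_on (t # ts) n x (passage x 0 + M)" by auto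
    then show "\<exists>M. forest_on (t # ts) n x M" by blast
  qed (use Cons.IH in auto)
qed (auto intro: exI[of _ 0])

lemma forest_on_unique: "forest_on ts n x M \<Longrightarrow> forest_on ts n x M' \<Longrightarrow> M = M'"
proof (induction ts arbitrary: x M M')
  case (Cons t ts)
  then obtain N where "N \<le> M" "N \<le> M'" "passage x 0 = N"
    "forest_on ts n (translate x (- int N)) (M - N)" "forest_on ts n (translate x (- int N)) (M' - N)"
    by auto
  then show ?case using Cons.IH by fastforce
qed simp

definition window :: "(int \<Rightarrow> int) \<Rightarrow> int \<Rightarrow> nat \<Rightarrow> int list" where
  "window x a N = map (\<lambda>i. x (a - 1 - int i)) [0..<N]"

definition window_set :: "((int \<Rightarrow> int) \<Rightarrow> bool) \<Rightarrow> nat \<Rightarrow> int list set" where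
  "window_set Q N = {window x 0 N | x. skip_free x \<and> Q x}"

lemma window_translate: "window (translate x a) 0 N = window x a N"
  by (simp add: window_def translate_def algebra_simps)

lemma window_eq_iff:
  "length xs = N \<Longrightarrow> window x a N = xs \<longleftrightarrow> (\<forall>i<N. x (a - 1 - int i) = xs ! i)"
  unfolding window_def list_eq_iff_nth_eq by auto

lemma agree_if_window_eq: "window x 0 N = window y 0 N \<Longrightarrow> agree x y (- int N) 0"
  unfolding agree_def
proof (intro allI impI)
  fix i assume eq: "window x 0 N = window y 0 N" and i: "- int N \<le> i \<and> i < 0"
  define k where "k = nat (- 1 - i)"
  have k: "k < N" "i = 0 - 1 - int k" using i unfolding k_def by auto
  have "window x 0 N ! k = window y 0 N ! k" using eq by simp
  then show "x i = y i" using k by (simp add: window_def)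
qed

lemma window_determined_iff_window:
  assumes "window_determined Q N" "skip_free x"
  shows "Q x \<longleftrightarrow> window x 0 N \<in> window_set Q N"
proof
  assume "window x 0 N \<in> window_set Q N"
  then obtain y where "skip_free y" "Q y" "window y 0 N = window x 0 N"
    unfolding window_set_def by auto
  then show "Q x" using assms agree_if_window_eq unfolding window_determined_def by blast
qed (use assms(2) window_set_def in blast)

section \<open>Independence of disjoint blocks\<close>

lemma measurable_map_upt:
  assumes "\<And>i. f i \<in> measurable M (count_space UNIV)"
  shows "(\<lambda>\<omega>. map (\<lambda>i. f i \<omega>) [0..<N]) \<in> measurable M (count_space (UNIV :: 'b::countable list set))"
proof (induction N)
  case (Suc N)
  have "(\<lambda>\<omega>. (\<lambda>l. l @ [f N \<omega>]) (map (\<lambda>i. f i \<omega>) [0..<N])) \<in> measurable M (count_space UNIV)"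
  proof (rule measurable_compose_countable[OF _ Suc.IH])
    fix l :: "'b list"
    show "(\<lambda>\<omega>. l @ [f N \<omega>]) \<in> measurable M (count_space UNIV)"
      by (rule measurable_compose_countable[where g="f N", OF _ assms]) simp
  qed
  then show ?case by simp
qed simp

locale iid_skip_free_walk = prob_space M for M :: "'a measure" +
  fixes X :: "int \<Rightarrow> 'a \<Rightarrow> int"
  assumes measurable_X: "\<And>i. X i \<in> measurable M (count_space UNIV)"
    and indep_X: "indep_vars (\<lambda>_. count_space UNIV) X UNIV"
    and distr_X: "\<And>i. distr M (count_space UNIV) (X i) = distr M (count_space UNIV) (X 0)"
    and X_ge: "\<And>i \<omega>. \<omega> \<in> space M \<Longrightarrow> X i \<omega> \<ge> -1"
begin

definition path :: "'a \<Rightarrow> int \<Rightarrow> int" where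
  "path \<omega> = (\<lambda>i. X i \<omega>)"

definition walk_event :: "((int \<Rightarrow> int) \<Rightarrow> bool) \<Rightarrow> 'a set" where
  "walk_event Q = {\<omega> \<in> space M. Q (path \<omega>)}"

lemma skip_free_path: "\<omega> \<in> space M \<Longrightarrow> skip_free (path \<omega>)"
  using X_ge by (simp add: skip_free_def path_def)

lemma walk_event_cong: "(\<And>x. skip_free x \<Longrightarrow> P x \<longleftrightarrow> Q x) \<Longrightarrow> walk_event P = walk_event Q"
  unfolding walk_event_def using skip_free_path by auto

lemma prob_X_eq: "prob {\<omega> \<in> space M. X i \<omega> = v} = prob {\<omega> \<in> space M. X 0 \<omega> = v}"
proof -
  have "measure (distr M (count_space UNIV) (X j)) {v} = prob {\<omega> \<in> space M. X j \<omega> = v}" for j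
    using measure_distr[OF measurable_X, of "{v}" j] by (simp add: vimage_def Int_def conj_commute)
  then show ?thesis using distr_X[of i] by metis
qed

lemma measurable_window: "(\<lambda>\<omega>. window (path \<omega>) a N) \<in> measurable M (count_space UNIV)"
  unfolding window_def path_def by (rule measurable_map_upt[OF measurable_X])

lemma sets_window: "{\<omega> \<in> space M. window (path \<omega>) a N \<in> S} \<in> events"
  using measurable_sets[OF measurable_window, of S a N] by (simp add: vimage_def Int_def conj_commute)

lemma prob_window_eq:
  assumes "length xs = N"
  shows "prob {\<omega> \<in> space M. window (path \<omega>) a N = xs} = (\<Prod>i<N. prob {\<omega> \<in> space M. X 0 \<omega> = xs ! i})"
proof (cases "N = 0")
  case True
  then show ?thesis using assms by (simp add: window_def prob_space)
next
  case False
  define J where "J = (\<lambda>i. a - 1 - int i) ` {..<N}"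
  define A where "A = (\<lambda>j. X j -` {xs ! nat (a - 1 - j)} \<inter> space M)"
  have inj: "inj_on (\<lambda>i. a - 1 - int i) {..<N}" by (auto simp: inj_on_def)
  have indep: "indep_sets (\<lambda>i. {X i -` B \<inter> space M | B. B \<in> sets (count_space UNIV)}) UNIV"
    using indep_X unfolding indep_vars_def2 by blast
  have "{\<omega> \<in> space M. window (path \<omega>) a N = xs} = (\<Inter>j\<in>J. A j)"
  proof (intro set_eqI)
    fix \<omega>
    have "a - 1 \<in> J" unfolding J_def using False by (auto intro: image_eqI[of _ _ 0])
    then have "\<omega> \<in> (\<Inter>j\<in>J. A j) \<longleftrightarrow> \<omega> \<in> space M \<and> (\<forall>i<N. \<omega> \<in> A (a - 1 - int i))"
      unfolding J_def A_def by blast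
    then show "\<omega> \<in> {\<omega> \<in> space M. window (path \<omega>) a N = xs} \<longleftrightarrow> \<omega> \<in> (\<Inter>j\<in>J. A j)"
      using window_eq_iff[OF assms] by (auto simp: A_def path_def)
  qed
  also have "prob \<dots> = (\<Prod>j\<in>J. prob (A j))"
    by (rule indep_setsD[OF indep]) (use False in \<open>auto simp: J_def A_def\<close>)
  also have "\<dots> = (\<Prod>i<N. prob (A (a - 1 - int i)))"
    unfolding J_def by (rule prod.reindex[OF inj, unfolded comp_def])
  also have "\<dots> = (\<Prod>i<N. prob {\<omega> \<in> space M. X 0 \<omega> = xs ! i})"
  proof (rule prod.cong[OF refl])
    fix i
    have "A (a - 1 - int i) = X (a - 1 - int i) -` {xs ! i} \<inter> space M"
      unfolding A_def by simp
    also have "\<dots> = {\<omega> \<in> space M. X (a - 1 - int i) \<omega> = xs ! i}"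
      by blast
    finally show "prob (A (a - 1 - int i)) = prob {\<omega> \<in> space M. X 0 \<omega> = xs ! i}"
      using prob_X_eq[of "a - 1 - int i" "xs ! i"] by simp
  qed
  finally show ?thesis .
qed

lemma prob_window_translate:
  "prob {\<omega> \<in> space M. window (path \<omega>) a N \<in> S} = prob {\<omega> \<in> space M. window (path \<omega>) 0 N \<in> S}"
proof -
  have preimage: "(\<lambda>\<omega>. window (path \<omega>) b N) -` S \<inter> space M = {\<omega> \<in> space M. window (path \<omega>) b N \<in> S}"
    for b S by auto
  have "distr M (count_space UNIV) (\<lambda>\<omega>. window (path \<omega>) a N) =
      distr M (count_space UNIV) (\<lambda>\<omega>. window (path \<omega>) 0 N)"
  proof (rule measure_eqI_countable[where A=UNIV])
    fix xs :: "int list"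
    have "emeasure (distr M (count_space UNIV) (\<lambda>\<omega>. window (path \<omega>) b N)) {xs} =
        ennreal (if length xs = N then (\<Prod>i<N. prob {\<omega> \<in> space M. X 0 \<omega> = xs ! i}) else 0)" for b
    proof -
      have "emeasure (distr M (count_space UNIV) (\<lambda>\<omega>. window (path \<omega>) b N)) {xs} =
          prob {\<omega> \<in> space M. window (path \<omega>) b N = xs}"
        using emeasure_distr[OF measurable_window, of "{xs}" b N] preimage[of b "{xs}"]
        by (simp add: emeasure_eq_measure)
      moreover have "length xs \<noteq> N \<Longrightarrow> {\<omega> \<in> space M. window (path \<omega>) b N = xs} = {}"
        by (auto simp: window_def)
      ultimately show ?thesis by (cases "length xs = N") (simp_all add: prob_window_eq)
    qed
    then show "emeasure (distr M (count_space UNIV) (\<lambda>\<omega>. window (path \<omega>) a N)) {xs} =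
        emeasure (distr M (count_space UNIV) (\<lambda>\<omega>. window (path \<omega>) 0 N)) {xs}"
      by simp
  qed auto
  then have "measure (distr M (count_space UNIV) (\<lambda>\<omega>. window (path \<omega>) a N)) S =
      measure (distr M (count_space UNIV) (\<lambda>\<omega>. window (path \<omega>) 0 N)) S"
    by simp
  then show ?thesis
    using measure_distr[OF measurable_window, of S a N] measure_distr[OF measurable_window, of S 0 N]
    by (simp add: preimage)
qed

lemma prob_window_indep:
  "prob {\<omega> \<in> space M. window (path \<omega>) a N \<in> S \<and> window (path \<omega>) (a - int N) L \<in> T} =
   prob {\<omega> \<in> space M. window (path \<omega>) a N \<in> S} * prob {\<omega> \<in> space M. window (path \<omega>) (a - int N) L \<in> T}"
proof -
  define I where "I = (\<lambda>b::bool. if b then {a - int N..<a} else {a - int N - int L..<a - int N})"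
  define Y where "Y = (\<lambda>b \<omega>. restrict (\<lambda>i. X i \<omega>) (I b))"
  define P where "P = (\<lambda>b. PiM (I b) (\<lambda>_. count_space (UNIV :: int set)))"
  have "indep_vars P Y UNIV"
    unfolding P_def Y_def by (rule indep_vars_restrict[OF indep_X]) (auto simp: I_def disjoint_family_on_def)
  then have indep: "indep_var (P True) (Y True) (P False) (Y False)"
    unfolding indep_var_def by (rule indep_vars_cong[THEN iffD1, rotated -1]) (auto split: bool.split)
  have P_count: "P b = count_space (PiE (I b) (\<lambda>_. UNIV))" for b
    unfolding P_def by (rule count_space_PiM_finite) (auto simp: I_def)
  have "indep_var (count_space UNIV) ((\<lambda>f. window f a N) \<circ> Y True)
      (count_space UNIV) ((\<lambda>f. window f (a - int N) L) \<circ> Y False)"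
    by (rule indep_var_compose[OF indep]) (simp_all add: P_count)
  moreover have "(\<lambda>f. window f a N) \<circ> Y True = (\<lambda>\<omega>. window (path \<omega>) a N)"
    "(\<lambda>f. window f (a - int N) L) \<circ> Y False = (\<lambda>\<omega>. window (path \<omega>) (a - int N) L)"
    by (auto simp: Y_def window_def I_def path_def fun_eq_iff)
  ultimately have "indep_var (count_space UNIV) (\<lambda>\<omega>. window (path \<omega>) a N)
      (count_space UNIV) (\<lambda>\<omega>. window (path \<omega>) (a - int N) L)"
    by simp
  from indep_varD[OF this, of S T] show ?thesis
    by (simp add: vimage_def Int_def conj_commute)
qed

lemma walk_event_translate_eq:
  assumes "window_determined Q N"
  shows "walk_event (\<lambda>x. Q (translate x a)) = {\<omega> \<in> space M. window (path \<omega>) a N \<in> window_set Q N}"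
  unfolding walk_event_def
  using window_determined_iff_window[OF assms skip_free_translate[OF skip_free_path]] window_translate
  by auto

lemma sets_walk_event: "window_determined Q N \<Longrightarrow> walk_event Q \<in> events"
  using walk_event_translate_eq[of Q N 0] sets_window by simp

lemma sets_walk_event_ex: "(\<And>m::nat. walk_event (Q m) \<in> events) \<Longrightarrow> walk_event (\<lambda>x. \<exists>m. Q m x) \<in> events"
proof -
  assume "\<And>m::nat. walk_event (Q m) \<in> events"
  then have "(\<Union>m. walk_event (Q m)) \<in> events" by blast
  moreover have "(\<Union>m. walk_event (Q m)) = walk_event (\<lambda>x. \<exists>m. Q m x)"
    unfolding walk_event_def by auto
  ultimately show ?thesis by simp
qed

lemma prob_walk_event_conj_translate:
  assumes "window_determined Q N" "window_determined R L"
  shows "prob (walk_event (\<lambda>x. Q x \<and> R (translate x (- int N)))) = prob (walk_event Q) * prob (walk_event R)"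
proof -
  let ?W = "\<lambda>a N S. {\<omega> \<in> space M. window (path \<omega>) a N \<in> S}"
  have "walk_event (\<lambda>x. Q x \<and> R (translate x (- int N))) =
     {\<omega> \<in> space M. window (path \<omega>) 0 N \<in> window_set Q N \<and>
                  window (path \<omega>) (0 - int N) L \<in> window_set R L}"
    using window_determined_iff_window[OF assms(1) skip_free_path]
      window_determined_iff_window[OF assms(2) skip_free_translate[OF skip_free_path]] window_translate
    unfolding walk_event_def by auto
  moreover have "prob {\<omega> \<in> space M. window (path \<omega>) 0 N \<in> window_set Q N \<and>
                  window (path \<omega>) (0 - int N) L \<in> window_set R L} =
      prob (?W 0 N (window_set Q N)) * prob (?W (0 - int N) L (window_set R L))"
    by (rule prob_window_indep)
  moreover have "?W 0 N (window_set Q N) = walk_event Q" "?W 0 L (window_set R L) = walk_event R"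
    using walk_event_translate_eq[OF assms(1), of 0] walk_event_translate_eq[OF assms(2), of 0] by simp_all
  moreover have "prob (?W (0 - int N) L (window_set R L)) = prob (?W 0 L (window_set R L))"
    by (rule prob_window_translate)
  ultimately show ?thesis by simp
qed

lemma walk_event_sums:
  assumes "\<And>m. walk_event (Q m) \<in> events"
    and "\<And>m m' x. skip_free x \<Longrightarrow> Q m x \<Longrightarrow> Q m' x \<Longrightarrow> m = m'"
  shows "(\<lambda>m::nat. prob (walk_event (Q m))) sums prob (walk_event (\<lambda>x. \<exists>m. Q m x))"
proof -
  have "(\<lambda>m. prob (walk_event (Q m))) sums prob (\<Union>m. walk_event (Q m))"
  proof (rule finite_measure_UNION)
    show "range (\<lambda>m. walk_event (Q m)) \<subseteq> events" using assms(1) by auto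
    show "disjoint_family (\<lambda>m. walk_event (Q m))"
      unfolding disjoint_family_on_def walk_event_def using assms(2) skip_free_path by blast
  qed
  moreover have "(\<Union>m. walk_event (Q m)) = walk_event (\<lambda>x. \<exists>m. Q m x)"
    unfolding walk_event_def by auto
  ultimately show ?thesis by simp
qed

text \<open>The event about the walk further left is not determined by a bounded window; it is split
  according to the length of the window each piece depends on.\<close>
lemma prob_walk_event_conj_ex:
  assumes "window_determined Q N" "\<And>m. window_determined (R m) m"
    and "\<And>m m' x. skip_free x \<Longrightarrow> R m x \<Longrightarrow> R m' x \<Longrightarrow> m = m'"
  shows "prob (walk_event (\<lambda>x. Q x \<and> (\<exists>m. R m (translate x (- int N))))) =
    prob (walk_event Q) * prob (walk_event (\<lambda>x. \<exists>m. R m x))"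
proof -
  have "window_determined (\<lambda>x. Q x \<and> R m (translate x (- int N))) (N + m)" for m
    by (rule window_determined_conj_translate[OF assms(1,2)])
  then have "(\<lambda>m. prob (walk_event (\<lambda>x. Q x \<and> R m (translate x (- int N))))) sums
      prob (walk_event (\<lambda>x. \<exists>m. Q x \<and> R m (translate x (- int N))))"
    by (intro walk_event_sums sets_walk_event) (use assms(3) skip_free_translate in blast)+
  then have "(\<lambda>m. prob (walk_event Q) * prob (walk_event (R m))) sums
      prob (walk_event (\<lambda>x. Q x \<and> (\<exists>m. R m (translate x (- int N)))))"
    using prob_walk_event_conj_translate[OF assms(1,2)] by simp
  moreover have "(\<lambda>m. prob (walk_event Q) * prob (walk_event (R m))) sums
      (prob (walk_event Q) * prob (walk_event (\<lambda>x. \<exists>m. R m x)))"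
    by (intro sums_mult walk_event_sums sets_walk_event[OF assms(2)]) (use assms(3) in blast)
  ultimately show ?thesis using sums_unique2 by blast
qed

lemma prob_forest:
  "prob (walk_event (forest ts n)) = (\<Prod>t\<leftarrow>ts. prob (walk_event (closed_trunc n t)))"
proof (induction ts)
  case Nil
  have "walk_event (\<lambda>_. True) = space M" unfolding walk_event_def by simp
  then show ?case by (simp add: prob_space)
next
  case (Cons t ts)
  define G where "G N x \<longleftrightarrow> closed_trunc n t x \<and> passage x 0 = N" for N x
  have G: "window_determined (G N) N" for N
    unfolding G_def by (rule window_determined_closed_trunc)
  have G_unique: "G N x \<Longrightarrow> G N' x \<Longrightarrow> N = N'" for N N' x
    unfolding G_def by simp
  have rest: "walk_event (\<lambda>x. \<exists>m. forest_on ts n x m) = walk_event (forest ts n)"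
    by (simp add: walk_event_def forest_iff_ex_forest_on)
  have "(\<lambda>N. prob (walk_event (\<lambda>x. G N x \<and> (\<exists>m. forest_on ts n (translate x (- int N)) m)))) sums
      prob (walk_event (\<lambda>x. \<exists>N. G N x \<and> (\<exists>m. forest_on ts n (translate x (- int N)) m)))"
  proof (rule walk_event_sums)
    fix N
    have "walk_event (\<lambda>x. G N x \<and> forest_on ts n (translate x (- int N)) m) \<in> events" for m
      using sets_walk_event[OF window_determined_conj_translate[OF G window_determined_forest_on]] .
    then have "walk_event (\<lambda>x. \<exists>m. G N x \<and> forest_on ts n (translate x (- int N)) m) \<in> events"
      by (rule sets_walk_event_ex)
    then show "walk_event (\<lambda>x. G N x \<and> (\<exists>m. forest_on ts n (translate x (- int N)) m)) \<in> events"
      by (simp add: walk_event_def)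
  qed (use G_unique in blast)
  moreover have "(\<lambda>N. prob (walk_event (G N)) * prob (walk_event (forest ts n))) sums
      (prob (walk_event (\<lambda>x. \<exists>N. G N x)) * prob (walk_event (forest ts n)))"
    by (intro sums_mult2 walk_event_sums sets_walk_event[OF G]) (use G_unique in blast)
  ultimately have "prob (walk_event (\<lambda>x. \<exists>N. G N x \<and> (\<exists>m. forest_on ts n (translate x (- int N)) m))) =
      prob (walk_event (\<lambda>x. \<exists>N. G N x)) * prob (walk_event (forest ts n))"
    using prob_walk_event_conj_ex[OF G window_determined_forest_on forest_on_unique] rest
    by (simp add: sums_unique2)
  moreover have "walk_event (\<lambda>x. \<exists>N. G N x \<and> (\<exists>m. forest_on ts n (translate x (- int N)) m)) =
      walk_event (forest (t # ts) n)"
    unfolding walk_event_def G_def by (auto simp: forest_iff_ex_forest_on[of ts])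
  moreover have "walk_event (\<lambda>x. \<exists>N. G N x) = walk_event (closed_trunc n t)"
    unfolding walk_event_def G_def by auto
  ultimately show ?case using Cons.IH by (simp del: forest.simps)
qed

definition offspring :: "nat \<Rightarrow> real" where
  "offspring k = prob {\<omega> \<in> space M. X 0 \<omega> + 1 = int k}"

lemma prob_root_degree: "prob (walk_event (\<lambda>x. root_degree x = K)) = offspring K"
proof -
  have "nat (X (-1) \<omega> + 1) = K \<longleftrightarrow> X (-1) \<omega> = int K - 1" if "\<omega> \<in> space M" for \<omega>
    using X_ge[OF that, of "-1"] by (simp add: nat_eq_iff) linarith
  then have "walk_event (\<lambda>x. root_degree x = K) = {\<omega> \<in> space M. X (-1) \<omega> = int K - 1}"
    unfolding walk_event_def path_def root_degree_def by auto
  moreover have "{\<omega> \<in> space M. X 0 \<omega> = int K - 1} = {\<omega> \<in> space M. X 0 \<omega> + 1 = int K}"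
    by auto
  ultimately show ?thesis using prob_X_eq[of "-1" "int K - 1"] by (simp add: offspring_def)
qed

lemma prob_closed_trunc_Suc:
  assumes "plane_tree t" "finite t"
  shows "prob (walk_event (closed_trunc (Suc n) t)) =
    offspring (nchild t []) * (\<Prod>k<nchild t []. prob (walk_event (closed_trunc n (subtree t k))))"
proof -
  define K where "K = nchild t []"
  define ts where "ts = map (subtree t) (rev [0..<K])"
  have "walk_event (closed_trunc (Suc n) t) =
      walk_event (\<lambda>x. root_degree x = K \<and> (\<exists>m. forest_on ts n (translate x (- int 1)) m))"
    by (rule walk_event_cong)
      (use closed_trunc_Suc_iff[OF _ assms] in \<open>simp add: K_def ts_def forest_iff_ex_forest_on\<close>)
  also have "prob \<dots> = offspring K * prob (walk_event (\<lambda>x. \<exists>m. forest_on ts n x m))"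
    using prob_walk_event_conj_ex[OF window_determined_root_degree window_determined_forest_on
        forest_on_unique] prob_root_degree by simp
  also have "walk_event (\<lambda>x. \<exists>m. forest_on ts n x m) = walk_event (forest ts n)"
    by (simp add: walk_event_def forest_iff_ex_forest_on)
  also have "prob \<dots> = (\<Prod>k<K. prob (walk_event (closed_trunc n (subtree t k))))"
    unfolding prob_forest ts_def
    by (simp add: prod.distinct_set_conv_list[symmetric] atLeast0LessThan comp_def)
  finally show ?thesis unfolding K_def .
qed

end

section \<open>Measurability of the truncated tree\<close>

lemma finite_card_eq_iff_list:
  "finite A \<and> k = card A \<longleftrightarrow> (\<exists>l. distinct l \<and> length l = k \<and> (\<forall>z. z \<in> set l \<longleftrightarrow> z \<in> A))"
  by (metis distinct_card finite_distinct_list finite_set set_eqI)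

context iid_skip_free_walk
begin

lemma measurable_sum_X: "finite F \<Longrightarrow> (\<lambda>\<omega>. \<Sum>l\<in>F. X l \<omega>) \<in> measurable M (count_space UNIV)"
proof (induction F rule: finite_induct)
  case (insert a F)
  have "(\<lambda>\<omega>. (\<lambda>s. X a \<omega> + s) (\<Sum>l\<in>F. X l \<omega>)) \<in> measurable M (count_space UNIV)"
  proof (rule measurable_compose_countable[OF _ insert.IH])
    show "(\<lambda>\<omega>. X a \<omega> + s) \<in> measurable M (count_space UNIV)" for s :: int
      by (rule measurable_compose_countable[where g="X a", OF _ measurable_X]) simp
  qed
  then show ?case using insert by simp
qed simp

lemma pred_sum_X [measurable]: "finite F \<Longrightarrow> Measurable.pred M (\<lambda>\<omega>. P (\<Sum>l\<in>F. X l \<omega>))"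
  by (rule measurable_compose[OF measurable_sum_X measurable_count_space])

lemma measurable_record_map [measurable]: "(\<lambda>\<omega>. record_map (path \<omega>) i) \<in> measurable M (count_space UNIV)"
proof (subst measurable_count_space_eq2_countable, intro conjI ballI)
  fix v :: int
  have "(\<lambda>\<omega>. record_map (path \<omega>) i) -` {v} \<inter> space M =
    {\<omega> \<in> space M. (v = i \<and> (\<forall>n>i. (\<Sum>l\<in>{i..<n}. X l \<omega>) < 0)) \<or>
     (i < v \<and> (\<Sum>l\<in>{i..<v}. X l \<omega>) \<ge> 0 \<and> (\<forall>n. i < n \<and> n < v \<longrightarrow> (\<Sum>l\<in>{i..<n}. X l \<omega>) < 0))}"
    using record_map_eq_iff[of "path _" i v] by (auto simp: path_def)
  also have "\<dots> \<in> sets M" by measurable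
  finally show "(\<lambda>\<omega>. record_map (path \<omega>) i) -` {v} \<inter> space M \<in> sets M" .
qed simp

lemma measurable_funpow_record_map [measurable]:
  "(\<lambda>\<omega>. (record_map (path \<omega>) ^^ n) j) \<in> measurable M (count_space UNIV)"
proof (induction n)
  case (Suc n)
  have "(\<lambda>\<omega>. (\<lambda>i \<omega>. record_map (path \<omega>) i) ((record_map (path \<omega>) ^^ n) j) \<omega>) \<in> measurable M (count_space UNIV)"
    by (rule measurable_compose_countable[OF measurable_record_map Suc.IH])
  then show ?case by simp
qed simp

lemma pred_in_rchildren [measurable]: "Measurable.pred M (\<lambda>\<omega>. j \<in> rchildren (path \<omega>) v)"
proof -
  have "(\<lambda>\<omega>. j \<in> rchildren (path \<omega>) v) = (\<lambda>\<omega>. (j = 0 \<or> (\<exists>n::nat. n \<ge> 1 \<and> (record_map (path \<omega>) ^^ n) j = 0)) \<and>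
      record_map (path \<omega>) j \<noteq> j \<and> record_map (path \<omega>) j = v)"
    by (auto simp: rchildren_def desc0_def)
  also have "Measurable.pred M \<dots>" by measurable
  finally show ?thesis .
qed

lemma pred_kth_child [measurable]: "Measurable.pred M (\<lambda>\<omega>. kth_child (path \<omega>) v k j)"
proof -
  have "(\<lambda>\<omega>. kth_child (path \<omega>) v k j) = (\<lambda>\<omega>. j \<in> rchildren (path \<omega>) v \<and>
      (\<exists>l::int list. distinct l \<and> length l = k \<and> (\<forall>z. z \<in> set l \<longleftrightarrow> z \<in> rchildren (path \<omega>) v \<and> z < j)))"
    unfolding kth_child_def by (subst finite_card_eq_iff_list) auto
  also have "Measurable.pred M \<dots>" by measurable
  finally show ?thesis .
qed

lemma pred_desc_label [measurable]: "Measurable.pred M (\<lambda>\<omega>. desc_label (path \<omega>) u v)"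
proof (induction u arbitrary: v rule: rev_induct)
  case (snoc k u)
  show ?case unfolding desc_label_snoc_iff using snoc.IH by measurable
qed (simp add: desc_label_Nil_iff)

lemma pred_trunc_desc_tree: "Measurable.pred M (\<lambda>\<omega>. trunc (desc_tree (path \<omega>)) n = t)"
proof -
  have "(\<lambda>\<omega>. trunc (desc_tree (path \<omega>)) n = t) =
    (\<lambda>\<omega>. \<forall>u::nat list. ((\<exists>v::int. desc_label (path \<omega>) u v) \<and> length u \<le> n) \<longleftrightarrow> u \<in> t)"
    by (auto simp: trunc_def desc_tree_def)
  also have "Measurable.pred M \<dots>" by measurable
  finally show ?thesis .
qed

end

section \<open>The Galton-Watson law\<close>

lemma sum_power_le:
  fixes q :: real
  assumes "0 \<le> q" "q \<le> 1"
  shows "(\<Sum>i<k. q ^ i) \<le> real k"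
  using sum_mono[of "{..<k}" "\<lambda>i. q ^ i" "\<lambda>_. 1"] assms by (simp add: power_le_one)

lemma sum_power_less:
  fixes q :: real
  assumes "0 \<le> q" "q < 1" "2 \<le> k"
  shows "(\<Sum>i<k. q ^ i) < real k"
proof -
  have "(\<Sum>i<k. q ^ i) < (\<Sum>i<k. 1)"
    by (rule sum_strict_mono_ex1) (use assms in \<open>auto simp: power_le_one intro!: bexI[of _ 1]\<close>)
  then show ?thesis by simp
qed

lemma pgf_fixpoint_sums:
  fixes p :: "nat \<Rightarrow> real" and q :: real
  assumes "p sums 1" "(\<lambda>k. p k * q ^ k) sums q" "q < 1"
  shows "(\<lambda>k. p k * (\<Sum>i<k. q ^ i)) sums 1"
proof -
  have "p k - p k * q ^ k = (1 - q) * (p k * (\<Sum>i<k. q ^ i))" for k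
  proof -
    have "p k - p k * q ^ k = p k * (1 - q ^ k)" by (simp add: algebra_simps)
    also have "\<dots> = p k * ((1 - q) * (\<Sum>i<k. q ^ i))" by (simp add: one_diff_power_eq)
    finally show ?thesis by (simp add: algebra_simps)
  qed
  then have "(\<lambda>k. (1 - q) * (p k * (\<Sum>i<k. q ^ i))) sums (1 - q)"
    using sums_diff[OF assms(1,2)] by simp
  then show ?thesis
    using sums_mult[of _ _ "1 / (1 - q)"] assms(3) by fastforce
qed

lemma pgf_fixpoint_vanishes:
  fixes p :: "nat \<Rightarrow> real" and q :: real
  assumes p_nonneg: "\<And>k. p k \<ge> 0" and mean: "summable (\<lambda>k. real k * p k)"
    and mean_le: "(\<Sum>k. real k * p k) \<le> 1" and q: "0 \<le> q" "q < 1"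
    and h_sums: "(\<lambda>k. p k * (\<Sum>i<k. q ^ i)) sums 1" and "k \<ge> 2"
  shows "p k = 0"
proof -
  define d where "d k = p k * (real k - (\<Sum>i<k. q ^ i))" for k
  have d_nonneg: "d k \<ge> 0" for k
    unfolding d_def using sum_power_le[OF q(1) less_imp_le[OF q(2)]] p_nonneg by simp
  have "d = (\<lambda>k. real k * p k - p k * (\<Sum>i<k. q ^ i))"
    by (simp add: d_def fun_eq_iff algebra_simps)
  then have d_sums: "d sums ((\<Sum>k. real k * p k) - 1)"
    using sums_diff[OF summable_sums[OF mean] h_sums] by simp
  have "d k \<le> suminf d"
    using sum_le_suminf[of d "{k}"] d_sums d_nonneg by (simp add: sums_iff)
  also have "suminf d \<le> 0" using d_sums mean_le by (simp add: sums_iff)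
  finally show ?thesis
    using sum_power_less[OF q \<open>k \<ge> 2\<close>] p_nonneg[of k] unfolding d_def
    by (simp add: mult_le_0_iff)
qed

text \<open>A probability generating function with mean at most one and \<open>p 0 > 0\<close> has no fixed
  point in \<open>[0, 1)\<close>: with \<open>h k = 1 + q + \<dots> + q^(k-1) \<le> k\<close>, a fixed point \<open>q < 1\<close> would give
  \<open>\<Sum> p k * h k = 1 \<ge> \<Sum> k * p k\<close>, forcing \<open>p\<close> to live on \<open>{0, 1}\<close> with \<open>p 1 = 1\<close>.\<close>
lemma pgf_fixpoint_eq_1:
  fixes p :: "nat \<Rightarrow> real" and q :: real
  assumes p_nonneg: "\<And>k. p k \<ge> 0" and p_sums: "p sums 1" and mean: "summable (\<lambda>k. real k * p k)"
    and mean_le: "(\<Sum>k. real k * p k) \<le> 1" and p0: "p 0 > 0"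
    and q: "0 \<le> q" "q \<le> 1" and fixpoint: "(\<lambda>k. p k * q ^ k) sums q"
  shows "q = 1"
proof (rule ccontr)
  assume "q \<noteq> 1"
  with q have "q < 1" by simp
  note h_sums = pgf_fixpoint_sums[OF p_sums fixpoint this]
  note p_zero = pgf_fixpoint_vanishes[OF p_nonneg mean mean_le q(1) \<open>q < 1\<close> h_sums]
  have "(\<lambda>k. p k * (\<Sum>i<k. q ^ i)) sums (\<Sum>k\<in>{0,1}. p k * (\<Sum>i<k. q ^ i))"
    by (rule sums_finite) (use p_zero in \<open>auto simp: not_less_eq_eq numeral_2_eq_2\<close>)
  moreover have "p sums (\<Sum>k\<in>{0,1}. p k)"
    by (rule sums_finite) (use p_zero in \<open>auto simp: not_less_eq_eq numeral_2_eq_2\<close>)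
  ultimately have "p 1 = 1" "p 0 + p 1 = 1"
    using h_sums p_sums sums_unique2 by fastforce+
  then show False using p0 by simp
qed

definition star_tree :: "nat \<Rightarrow> nat list set" where
  "star_tree K = insert [] ((\<lambda>k. [k]) ` {..<K})"

lemma star_tree:
  shows "plane_tree (star_tree K)" "finite (star_tree K)" "nchild (star_tree K) [] = K"
    and "k < K \<Longrightarrow> subtree (star_tree K) k = {[]}"
proof -
  show "plane_tree (star_tree K)"
    unfolding plane_tree_def star_tree_def by (auto simp: append_eq_Cons_conv)
  show "finite (star_tree K)" unfolding star_tree_def by simp
  have "{k. [] @ [k] \<in> star_tree K} = {..<K}" unfolding star_tree_def by auto
  then show "nchild (star_tree K) [] = K" unfolding nchild_def by simp
  show "k < K \<Longrightarrow> subtree (star_tree K) k = {[]}" unfolding star_tree_def subtree_def by auto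
qed

lemma closed_trunc_0: "closed_trunc 0 {[]} x \<longleftrightarrow> has_passage x 0"
  by (simp add: closed_trunc_def trunc_desc_tree_0)

lemma closed_trunc_1_star_tree:
  assumes "skip_free x" "has_passage x 0"
  shows "closed_trunc 1 (star_tree (root_degree x)) x"
  using trunc_desc_tree_Suc[OF assms, of 0] assms(2)
  unfolding closed_trunc_def star_tree_def trunc_desc_tree_0 by auto

context iid_skip_free_walk
begin

lemma sets_walk_event_closed_trunc: "walk_event (closed_trunc n t) \<in> events"
proof -
  have "walk_event (closed_trunc n t) = walk_event (\<lambda>x. \<exists>N. closed_trunc n t x \<and> passage x 0 = N)"
    by simp
  also have "\<dots> \<in> events"
    by (rule sets_walk_event_ex, rule sets_walk_event, rule window_determined_closed_trunc)
  finally show ?thesis .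
qed

definition passage_prob :: real where
  "passage_prob = prob (walk_event (\<lambda>x. has_passage x 0))"

lemma passage_prob_fixpoint: "(\<lambda>K. offspring K * passage_prob ^ K) sums passage_prob"
proof -
  have "prob (walk_event (closed_trunc 1 (star_tree K))) = offspring K * passage_prob ^ K" for K
    using prob_closed_trunc_Suc[OF star_tree(1,2), of 0] star_tree(3,4)
    by (simp add: closed_trunc_0[abs_def] passage_prob_def)
  moreover have "(\<lambda>K. prob (walk_event (closed_trunc 1 (star_tree K)))) sums
      prob (walk_event (\<lambda>x. \<exists>K. closed_trunc 1 (star_tree K) x))"
    by (rule walk_event_sums[OF sets_walk_event_closed_trunc])
      (metis closed_trunc_def star_tree(3))
  moreover have "walk_event (\<lambda>x. \<exists>K. closed_trunc 1 (star_tree K) x) = walk_event (\<lambda>x. has_passage x 0)"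
    by (rule walk_event_cong) (use closed_trunc_1_star_tree in \<open>auto simp: closed_trunc_def\<close>)
  ultimately show ?thesis unfolding passage_prob_def by simp
qed

lemma offspring_nonneg: "offspring k \<ge> 0"
  by (simp add: offspring_def)

lemma sets_offspring: "{\<omega> \<in> space M. X 0 \<omega> + 1 = int k} \<in> events"
proof -
  have "Measurable.pred M (\<lambda>\<omega>. X 0 \<omega> + 1 = int k)"
    by (rule measurable_compose[OF measurable_X measurable_count_space])
  then show ?thesis by (simp add: pred_def)
qed

lemma offspring_sums: "offspring sums 1"
proof -
  have "offspring sums prob (\<Union>k. {\<omega> \<in> space M. X 0 \<omega> + 1 = int k})"
    unfolding offspring_def
    by (rule finite_measure_UNION) (auto simp: sets_offspring disjoint_family_on_def)
  moreover have "(\<Union>k. {\<omega> \<in> space M. X 0 \<omega> + 1 = int k}) = space M"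
  proof (intro set_eqI iffI)
    fix \<omega> assume "\<omega> \<in> space M"
    moreover have "X 0 \<omega> + 1 = int (nat (X 0 \<omega> + 1))" using X_ge[OF \<open>\<omega> \<in> space M\<close>, of 0] by simp
    ultimately show "\<omega> \<in> (\<Union>k. {\<omega> \<in> space M. X 0 \<omega> + 1 = int k})" by blast
  qed auto
  ultimately show ?thesis by (simp add: prob_space)
qed

lemma offspring_mean:
  assumes "integrable M (\<lambda>\<omega>. real_of_int (X 0 \<omega>))" "(\<integral>\<omega>. real_of_int (X 0 \<omega>) \<partial>M) \<le> 0"
  shows "summable (\<lambda>k. real k * offspring k)" "(\<Sum>k. real k * offspring k) \<le> 1"
proof -
  define A where "A k = {\<omega> \<in> space M. X 0 \<omega> + 1 = int k}" for k
  have A: "integrable M (indicator (A k) :: 'a \<Rightarrow> real)" for k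
    unfolding A_def using sets_offspring by (simp add: emeasure_eq_measure)
  have partial: "(\<Sum>k<L. real k * offspring k) \<le> 1" for L
  proof -
    have term_eq: "real k * offspring k = (\<integral>\<omega>. real k * indicator (A k) \<omega> \<partial>M)" for k
    proof -
      have "A k \<inter> space M = A k" unfolding A_def by auto
      then show ?thesis by (simp add: offspring_def A_def[symmetric])
    qed
    have "(\<Sum>k<L. real k * offspring k) = (\<Sum>k<L. (\<integral>\<omega>. real k * indicator (A k) \<omega> \<partial>M))"
      by (rule sum.cong[OF refl term_eq])
    also have "\<dots> = (\<integral>\<omega>. (\<Sum>k<L. real k * indicator (A k) \<omega>) \<partial>M)"
      by (rule Bochner_Integration.integral_sum[symmetric]) (use A in auto)
    also have "\<dots> \<le> (\<integral>\<omega>. real_of_int (X 0 \<omega>) + 1 \<partial>M)"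
    proof (rule integral_mono)
      show "integrable M (\<lambda>\<omega>. \<Sum>k<L. real k * indicator (A k) \<omega>)"
        by (intro Bochner_Integration.integrable_sum integrable_mult_right A)
      show "integrable M (\<lambda>\<omega>. real_of_int (X 0 \<omega>) + 1)" using assms(1) by simp
      fix \<omega> assume \<omega>: "\<omega> \<in> space M"
      have "(\<Sum>k<L. real k * indicator (A k) \<omega>) = (\<Sum>k<L. if k = nat (X 0 \<omega> + 1) then real k else 0)"
        using \<omega> X_ge[OF \<omega>, of 0] by (intro sum.cong) (auto simp: indicator_def A_def)
      also have "\<dots> \<le> real_of_int (X 0 \<omega>) + 1"
        using X_ge[OF \<omega>, of 0] by (simp add: sum.delta)
      finally show "(\<Sum>k<L. real k * indicator (A k) \<omega>) \<le> real_of_int (X 0 \<omega>) + 1" .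
    qed
    also have "\<dots> \<le> 1"
      using assms by (simp add: prob_space)
    finally show ?thesis .
  qed
  show "summable (\<lambda>k. real k * offspring k)"
    by (rule summableI_nonneg_bounded[where x=1]) (use partial offspring_nonneg in auto)
  then show "(\<Sum>k. real k * offspring k) \<le> 1" by (rule suminf_le_const[OF _ partial])
qed

lemma passage_prob_eq_1:
  assumes "integrable M (\<lambda>\<omega>. real_of_int (X 0 \<omega>))" "(\<integral>\<omega>. real_of_int (X 0 \<omega>) \<partial>M) \<le> 0"
    and "prob {\<omega> \<in> space M. X 0 \<omega> = -1} > 0"
  shows "passage_prob = 1"
proof (rule pgf_fixpoint_eq_1[OF offspring_nonneg offspring_sums offspring_mean[OF assms(1,2)]])
  have "{\<omega> \<in> space M. X 0 \<omega> + 1 = 0} = {\<omega> \<in> space M. X 0 \<omega> = -1}" by auto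
  then show "offspring 0 > 0" using assms(3) by (simp add: offspring_def)
qed (use passage_prob_fixpoint in \<open>auto simp: passage_prob_def\<close>)

lemma prob_closed_trunc:
  assumes "passage_prob = 1" "plane_tree t" "finite t" "\<forall>u\<in>t. length u \<le> n"
  shows "prob (walk_event (closed_trunc n t)) = gw_weight offspring t n"
  using assms(2-4)
proof (induction n arbitrary: t)
  case 0
  then have "t = {[]}" unfolding plane_tree_def by auto
  then show ?case
    using assms(1) by (simp add: closed_trunc_0[abs_def] passage_prob_def gw_weight_def)
next
  case (Suc n)
  have "prob (walk_event (closed_trunc n (subtree t k))) = gw_weight offspring (subtree t k) n"
    if "k < nchild t []" for k
    using Suc.IH plane_tree_subtree[OF Suc.prems(1,2) that] finite_subtree[OF Suc.prems(2)]
      Suc.prems(3) unfolding subtree_def by fastforce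
  then show ?case
    using prob_closed_trunc_Suc[OF Suc.prems(1,2)] gw_weight_Suc[OF Suc.prems(1,2)] by simp
qed

lemma prob_trunc_desc_tree:
  assumes "passage_prob = 1"
  shows "prob {\<omega> \<in> space M. trunc (desc_tree (path \<omega>)) n = t} = prob (walk_event (closed_trunc n t))"
proof (rule measure_eq_AE)
  have "walk_event (\<lambda>x. has_passage x 0) \<in> events"
    using sets_walk_event_closed_trunc[of 0 "{[]}"] by (simp add: closed_trunc_0[abs_def])
  then have "AE \<omega> in M. \<omega> \<in> walk_event (\<lambda>x. has_passage x 0)"
    using assms prob_eq_1 unfolding passage_prob_def by blast
  then show "AE \<omega> in M. \<omega> \<in> {\<omega> \<in> space M. trunc (desc_tree (path \<omega>)) n = t} \<longleftrightarrow>
      \<omega> \<in> walk_event (closed_trunc n t)"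
    by eventually_elim (auto simp: walk_event_def closed_trunc_def)
  show "{\<omega> \<in> space M. trunc (desc_tree (path \<omega>)) n = t} \<in> events"
    using pred_trunc_desc_tree by (simp add: pred_def)
qed (rule sets_walk_event_closed_trunc)

end

theorem proposition4p13:
  fixes M :: "'a measure" and X :: "int \<Rightarrow> 'a \<Rightarrow> int"
  assumes "prob_space M"
    and "\<And>i. X i \<in> measurable M (count_space UNIV)"
    and "prob_space.indep_vars M (\<lambda>_. count_space UNIV) X UNIV"
    and "\<And>i. distr M (count_space UNIV) (X i) = distr M (count_space UNIV) (X 0)"
    and "\<And>i \<omega>. \<omega> \<in> space M \<Longrightarrow> X i \<omega> \<ge> -1"
    and "integrable M (\<lambda>\<omega>. real_of_int (X 0 \<omega>))"
    and "measure M {\<omega> \<in> space M. X 0 \<omega> = -1} > 0"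
    and "(\<integral>\<omega>. real_of_int (X 0 \<omega>) \<partial>M) \<le> 0"
  shows "ordered_GW M (\<lambda>\<omega>. desc_tree (\<lambda>n. X n \<omega>))
           (\<lambda>k. measure M {\<omega> \<in> space M. X 0 \<omega> + 1 = int k})"
proof -
  interpret iid_skip_free_walk M X
    by (rule iid_skip_free_walk.intro[OF assms(1)], unfold_locales) (use assms in auto)
  have passage: "passage_prob = 1" by (rule passage_prob_eq_1[OF assms(6,8,7)])
  show ?thesis
    unfolding ordered_GW_def path_def[symmetric]
  proof (intro allI impI conjI)
    fix n t
    show "{\<omega> \<in> space M. trunc (desc_tree (path \<omega>)) n = t} \<in> events"
      using pred_trunc_desc_tree by (simp add: pred_def)
    assume "finite t \<and> plane_tree t \<and> (\<forall>u\<in>t. length u \<le> n)"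
    then show "prob {\<omega> \<in> space M. trunc (desc_tree (path \<omega>)) n = t} =
        (\<Prod>u\<in>{u \<in> t. length u < n}. prob {\<omega> \<in> space M. X 0 \<omega> + 1 = int (nchild t u)})"
      using prob_trunc_desc_tree[OF passage] prob_closed_trunc[OF passage]
      by (simp add: gw_weight_def offspring_def)
  qed
qed

end
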